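(* For any probability density $f$ on $\mathbb R^d$ with finite first moment and any estimator $\tilde f_n$ of $f$ (a possibly signed integrable function with $\int\tilde f_n=1$) which has a finite first moment almost surely, $$W_1(\tilde f_n,f)\lesssim\sum_{k\in\mathbb Z^d}\|k\|\,|\langle f-\tilde f_n,\phi_k\rangle|+\sum_{l\ge0}2^{-l(\frac d2+1)}\sum_{k}|\langle f-\tilde f_n,\psi_{lk}\rangle|,$$ where the constant depends only on the wavelet basis.
   Context: $\{\phi_k,\psi_{lk}:k\in\mathbb Z^d,l\ge0\}$ is an $S$-regular, compactly supported tensor-product Daubechies wavelet orthonormal basis of $L_2(\mathbb R^d)$, $\phi_k=\phi(\cdot-k)$, $\psi_{lk}=2^{ld/2}\psi^\iota(2^l\cdot-k)$ with the type $\iota\in\{0,1\}^d\setminus\{0\}$ suppressed (sums over $k$ for $\psi_{lk}$ run over $k\in\mathbb Z^d$ and all types). $\langle f,g\rangle=\int fg$. For (possibly signed) $f,g$ of equal total mass with finite first moments, $W_1(f,g)=\sup_h\int_{\mathbb R^d}h(f-g)$ over 1-Lipschitz $h:\mathbb R^d\to\mathbb R$ (Kantorovich–Rubinstein), which is the 1-Wasserstein distance when $f,g$ are probability densities; finite first moment means $\int\|x\||f(x)|dx<\infty$. *)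

theory Defs
  imports "HOL-Analysis.Analysis"
begin

definition wip :: "('a::euclidean_space \<Rightarrow> real) \<Rightarrow> ('a \<Rightarrow> real) \<Rightarrow> real" where
  "wip u v = (LINT x|lborel. u x * v x)"

text \<open>Kantorovich-Rubinstein form of the 1-Wasserstein distance (for possibly signed f, g).\<close>
definition W1 :: "('a::euclidean_space \<Rightarrow> real) \<Rightarrow> ('a \<Rightarrow> real) \<Rightarrow> real" where
  "W1 f g = (SUP h \<in> {h :: 'a \<Rightarrow> real. 1-lipschitz_on UNIV h}. LINT x|lborel. h x * (f x - g x))"

definition finite_first_moment :: "('a::euclidean_space \<Rightarrow> real) \<Rightarrow> bool" where
  "finite_first_moment f \<longleftrightarrow> integrable lborel (\<lambda>x. norm x * \<bar>f x\<bar>)"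

definition prob_density :: "('a::euclidean_space \<Rightarrow> real) \<Rightarrow> bool" where
  "prob_density f \<longleftrightarrow> f \<in> borel_measurable lborel \<and> (\<forall>x. 0 \<le> f x) \<and>
     integrable lborel f \<and> (LINT x|lborel. f x) = 1"

definition C_reg :: "nat \<Rightarrow> (real \<Rightarrow> real) \<Rightarrow> bool" where
  "C_reg S u \<longleftrightarrow> (\<forall>j\<le>S. continuous_on UNIV ((deriv ^^ j) u)) \<and>
                  (\<forall>j<S. \<forall>x. (deriv ^^ j) u differentiable (at x))"

definition compact_supp :: "(real \<Rightarrow> real) \<Rightarrow> bool" where
  "compact_supp u \<longleftrightarrow> (\<exists>a. \<forall>x. a < \<bar>x\<bar> \<longrightarrow> u x = 0)"

definition int_vec :: "('n::finite \<Rightarrow> int) \<Rightarrow> real^'n" where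
  "int_vec k = (\<chi> i. real_of_int (k i))"

definition phi_k :: "(real \<Rightarrow> real) \<Rightarrow> ('n::finite \<Rightarrow> int) \<Rightarrow> real^'n \<Rightarrow> real" where
  "phi_k \<phi>0 k x = (\<Prod>i\<in>UNIV. \<phi>0 (x $ i - real_of_int (k i)))"

definition psi_type :: "(real \<Rightarrow> real) \<Rightarrow> (real \<Rightarrow> real) \<Rightarrow> ('n::finite \<Rightarrow> bool) \<Rightarrow> real^'n \<Rightarrow> real" where
  "psi_type \<phi>0 \<psi>0 \<iota> x = (\<Prod>i\<in>UNIV. (if \<iota> i then \<psi>0 else \<phi>0) (x $ i))"

definition wtypes :: "('n::finite \<Rightarrow> bool) set" where
  "wtypes = {\<iota>. \<iota> \<noteq> (\<lambda>_. False)}"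

definition psi_lk :: "(real \<Rightarrow> real) \<Rightarrow> (real \<Rightarrow> real) \<Rightarrow> nat \<Rightarrow> ('n::finite \<Rightarrow> bool)
                       \<Rightarrow> ('n \<Rightarrow> int) \<Rightarrow> real^'n \<Rightarrow> real" where
  "psi_lk \<phi>0 \<psi>0 l \<iota> k x =
     2 powr (real l * real CARD('n) / 2) * psi_type \<phi>0 \<psi>0 \<iota> (2 ^ l *\<^sub>R x - int_vec k)"

definition wsys :: "(real \<Rightarrow> real) \<Rightarrow> (real \<Rightarrow> real)
                    \<Rightarrow> (('n::finite \<Rightarrow> int) + (nat \<times> ('n \<Rightarrow> bool) \<times> ('n \<Rightarrow> int))) \<Rightarrow> real^'n \<Rightarrow> real" where
  "wsys \<phi>0 \<psi>0 a = (case a of Inl k \<Rightarrow> phi_k \<phi>0 k | Inr (l, \<iota>, k) \<Rightarrow> psi_lk \<phi>0 \<psi>0 l \<iota> k)"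

definition wsys_index :: "(('n::finite \<Rightarrow> int) + (nat \<times> ('n \<Rightarrow> bool) \<times> ('n \<Rightarrow> int))) set" where
  "wsys_index = range Inl \<union> Inr ` (UNIV \<times> wtypes \<times> UNIV)"

definition square_integrable :: "('a::euclidean_space \<Rightarrow> real) \<Rightarrow> bool" where
  "square_integrable u \<longleftrightarrow> u \<in> borel_measurable lborel \<and> integrable lborel (\<lambda>x. (u x)\<^sup>2)"

text \<open>Orthonormal basis of L2(real^'n): orthonormal system which is complete
  (Parseval identity for every square-integrable function).\<close>
definition is_ONB :: "('i \<Rightarrow> ('a::euclidean_space \<Rightarrow> real)) \<Rightarrow> 'i set \<Rightarrow> bool" where
  "is_ONB b I \<longleftrightarrow>
     (\<forall>a\<in>I. square_integrable (b a)) \<and>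
     (\<forall>a\<in>I. \<forall>a'\<in>I. wip (b a) (b a') = (if a = a' then 1 else 0)) \<and>
     (\<forall>u. square_integrable u \<longrightarrow> ((\<lambda>a. (wip u (b a))\<^sup>2) has_sum (LINT x|lborel. (u x)\<^sup>2)) I)"

definition wavelet_basis :: "'n::finite itself \<Rightarrow> nat \<Rightarrow> (real \<Rightarrow> real) \<Rightarrow> (real \<Rightarrow> real) \<Rightarrow> bool" where
  "wavelet_basis _ S \<phi>0 \<psi>0 \<longleftrightarrow>
     C_reg S \<phi>0 \<and> C_reg S \<psi>0 \<and> compact_supp \<phi>0 \<and> compact_supp \<psi>0 \<and>
     is_ONB (wsys \<phi>0 \<psi>0 :: _ \<Rightarrow> real^'n \<Rightarrow> real) wsys_index"

end

theory Submission
  imports Defs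
begin

text \<open>
  Put \<open>u = g - f\<close>; it has mean zero and a finite first moment, and \<open>W1(g, f)\<close> is the supremum
  of \<open>\<integral>h u\<close> over \<open>1\<close>-Lipschitz \<open>h\<close>. Adding a constant to \<open>h\<close> does not change \<open>\<integral>h u\<close>, so \<open>h\<close> may
  be taken to satisfy \<open>\<bar>h x\<bar> \<le> \<parallel>x\<parallel> + c\<close> and to be orthogonal to \<open>\<Phi>\<close>; this uses \<open>\<integral>\<Phi> \<noteq> 0\<close>, which,
  like \<open>\<integral>\<psi>\<^sup>\<iota> = 0\<close>, follows from the completeness of the basis. By Parseval (after cutting \<open>h\<close> off
  at a large radius and truncating \<open>u\<close>, both removed in the limit) \<open>\<integral>h u = \<Sum> \<langle>h, b\<rangle> \<langle>u, b\<rangle>\<close>.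
  Linear growth gives \<open>\<langle>h, \<phi>_k\<rangle> = O(\<parallel>k\<parallel>)\<close>, and since \<open>\<psi>_lk\<close> has mean zero and a support of
  diameter \<open>O(2^-l)\<close>, on which \<open>h\<close> varies by \<open>O(2^-l)\<close>, \<open>\<langle>h, \<psi>_lk\<rangle> = O(2^(-l(d/2+1)))\<close>.\<close>

section \<open>Affine changes of variables\<close>

lemma nn_integral_lborel_affine:
  fixes f :: "'a::euclidean_space \<Rightarrow> ennreal" and c :: real
  assumes [measurable]: "f \<in> borel_measurable borel" and c: "c \<noteq> 0"
  shows "(\<integral>\<^sup>+x. f x \<partial>lborel) = \<bar>c\<bar> ^ DIM('a) * (\<integral>\<^sup>+x. f (t + c *\<^sub>R x) \<partial>lborel)"
  by (subst lborel_affine[OF c, of t])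
     (simp add: nn_integral_density nn_integral_distr nn_integral_cmult)

lemma integrable_lborel_affine:
  fixes f :: "'a::euclidean_space \<Rightarrow> real"
  assumes f: "integrable lborel f" and c: "c \<noteq> 0"
  shows "integrable lborel (\<lambda>x. f (t + c *\<^sub>R x))"
  using f f[THEN borel_measurable_integrable] unfolding integrable_iff_bounded
  by (subst (asm) nn_integral_lborel_affine[where c=c and t=t]) (auto simp: ennreal_mult_less_top c)

lemma integrable_lborel_affine_iff:
  fixes f :: "'a::euclidean_space \<Rightarrow> real"
  assumes c: "c \<noteq> 0"
  shows "integrable lborel (\<lambda>x. f (t + c *\<^sub>R x)) \<longleftrightarrow> integrable lborel f"
proof
  assume "integrable lborel (\<lambda>x. f (t + c *\<^sub>R x))"
  from integrable_lborel_affine[OF this, of "1/c" "- t /\<^sub>R c"] c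
  show "integrable lborel f" by (simp add: algebra_simps)
qed (use integrable_lborel_affine c in auto)

lemma integral_lborel_affine:
  fixes f :: "'a::euclidean_space \<Rightarrow> real" and c :: real
  assumes c: "c \<noteq> 0"
  shows "(\<integral>x. f x \<partial>lborel) = \<bar>c\<bar> ^ DIM('a) * (\<integral>x. f (t + c *\<^sub>R x) \<partial>lborel)"
proof cases
  assume f[measurable]: "integrable lborel f"
  then show ?thesis
    using c f[THEN borel_measurable_integrable] f[THEN integrable_lborel_affine, of c t]
    by (subst lborel_affine[OF c, of t]) (simp add: integral_density integral_distr)
next
  assume "\<not> integrable lborel f"
  with c show ?thesis by (simp add: integrable_lborel_affine_iff not_integrable_integral_eq)
qed

section \<open>Continuous functions with compact support\<close>

definition cont_supp_cball :: "('a::euclidean_space \<Rightarrow> real) \<Rightarrow> real \<Rightarrow> bool" where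
  "cont_supp_cball \<Theta> B \<longleftrightarrow> continuous_on UNIV \<Theta> \<and> 0 \<le> B \<and> (\<forall>y. B < norm y \<longrightarrow> \<Theta> y = 0)"

lemma cont_supp_cball_bounded:
  assumes "cont_supp_cball \<Theta> B"
  obtains M where "0 \<le> M" "\<And>y. \<bar>\<Theta> y\<bar> \<le> M"
proof -
  have "compact (\<Theta> ` cball 0 B)"
    using assms unfolding cont_supp_cball_def
    by (intro compact_continuous_image) (auto intro: continuous_on_subset)
  then obtain M where M: "\<forall>z\<in>\<Theta> ` cball 0 B. norm z \<le> M"
    using compact_imp_bounded bounded_iff by metis
  have "\<bar>\<Theta> y\<bar> \<le> max M 0" for y
    using M assms unfolding cont_supp_cball_def by (cases "norm y \<le> B") (force simp: dist_norm)+
  then show ?thesis using that[of "max M 0"] by simp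
qed

lemma cont_supp_cball_measurable: "cont_supp_cball \<Theta> B \<Longrightarrow> \<Theta> \<in> borel_measurable borel"
  unfolding cont_supp_cball_def by (auto intro: borel_measurable_continuous_onI)

lemma cont_supp_cball_abs: "cont_supp_cball \<Theta> B \<Longrightarrow> cont_supp_cball (\<lambda>x. \<bar>\<Theta> x\<bar>) B"
  unfolding cont_supp_cball_def by (auto intro: continuous_intros)

lemma integrable_continuous_mult_cont_supp_cball:
  assumes "cont_supp_cball \<Theta> B" "continuous_on UNIV v"
  shows "integrable lborel (\<lambda>x. v x * \<Theta> x)"
proof -
  have "integrable lborel (\<lambda>x. indicator (cball 0 B) x *\<^sub>R (v x * \<Theta> x))"
    using assms unfolding cont_supp_cball_def
    by (intro borel_integrable_compact) (auto intro: continuous_on_subset continuous_intros)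
  also have "(\<lambda>x. indicator (cball 0 B) x *\<^sub>R (v x * \<Theta> x)) = (\<lambda>x. v x * \<Theta> x)"
    using assms unfolding cont_supp_cball_def by (auto simp: indicator_def fun_eq_iff)
  finally show ?thesis .
qed

lemma integrable_cont_supp_cball: "cont_supp_cball \<Theta> B \<Longrightarrow> integrable lborel \<Theta>"
  using integrable_continuous_mult_cont_supp_cball[of \<Theta> B "\<lambda>_. 1"] by simp

lemma integrable_mult_cont_supp_cball:
  assumes \<Theta>: "cont_supp_cball \<Theta> B" and v: "integrable lborel v"
  shows "integrable lborel (\<lambda>x. v x * \<Theta> x)"
proof -
  obtain M where M: "0 \<le> M" "\<And>y. \<bar>\<Theta> y\<bar> \<le> M"
    using cont_supp_cball_bounded[OF \<Theta>] by blast
  have "(\<lambda>x. v x * \<Theta> x) \<in> borel_measurable lborel"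
    using v cont_supp_cball_measurable[OF \<Theta>] by (auto intro!: borel_measurable_times)
  moreover have "\<bar>v x * \<Theta> x\<bar> \<le> \<bar>M * v x\<bar>" for x
    using mult_right_mono[OF M(2)[of x] abs_ge_zero[of "v x"]] M(1) by (simp add: abs_mult mult.commute)
  then have "AE x in lborel. norm (v x * \<Theta> x) \<le> norm (M * v x)" by simp
  ultimately show ?thesis
    by (rule Bochner_Integration.integrable_bound[rotated]) (use v in simp)
qed

section \<open>Dyadic atoms\<close>

definition dyadic_atom :: "(real^'n \<Rightarrow> real) \<Rightarrow> nat \<Rightarrow> ('n::finite \<Rightarrow> int) \<Rightarrow> real^'n \<Rightarrow> real" where
  "dyadic_atom \<Theta> l k x = 2 powr (real l * real CARD('n) / 2) * \<Theta> (2 ^ l *\<^sub>R x - int_vec k)"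

lemma dyadic_atom_nonzeroD:
  assumes "cont_supp_cball \<Theta> B" "dyadic_atom \<Theta> l k x \<noteq> 0"
  shows "norm (2 ^ l *\<^sub>R x - int_vec k) \<le> B"
  using assms unfolding cont_supp_cball_def dyadic_atom_def by (metis mult_zero_right not_le)

lemma abs_dyadic_atom: "\<bar>dyadic_atom \<Theta> l k x\<bar> = dyadic_atom (\<lambda>y. \<bar>\<Theta> y\<bar>) l k x"
  unfolding dyadic_atom_def by (simp add: abs_mult)

lemma cont_supp_cball_dyadic_atom:
  fixes \<Theta> :: "real^'n::finite \<Rightarrow> real"
  assumes \<Theta>: "cont_supp_cball \<Theta> B"
  shows "cont_supp_cball (dyadic_atom \<Theta> l k) ((B + norm (int_vec k)) / 2 ^ l)"
  unfolding cont_supp_cball_def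
proof (intro conjI allI impI)
  have "continuous_on UNIV \<Theta>" using \<Theta> unfolding cont_supp_cball_def by simp
  moreover have "continuous_on UNIV (\<lambda>x. 2 ^ l *\<^sub>R x - int_vec k)"
    by (intro continuous_on_diff continuous_on_scaleR continuous_on_const continuous_on_id)
  ultimately have "continuous_on UNIV (\<lambda>x. \<Theta> (2 ^ l *\<^sub>R x - int_vec k))"
    by (rule continuous_on_compose2) simp
  then show "continuous_on UNIV (dyadic_atom \<Theta> l k)"
    unfolding dyadic_atom_def[abs_def] by (intro continuous_intros)
  show "0 \<le> (B + norm (int_vec k)) / 2 ^ l" using \<Theta> by (auto simp: cont_supp_cball_def)
  fix y :: "real^'n" assume y: "(B + norm (int_vec k)) / 2 ^ l < norm y"
  show "dyadic_atom \<Theta> l k y = 0"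
  proof (rule ccontr)
    assume "dyadic_atom \<Theta> l k y \<noteq> 0"
    then have "norm (2 ^ l *\<^sub>R y - int_vec k) \<le> B" by (rule dyadic_atom_nonzeroD[OF \<Theta>])
    moreover have "norm (2 ^ l *\<^sub>R y) \<le> norm (2 ^ l *\<^sub>R y - int_vec k) + norm (int_vec k)"
      by (metis diff_add_cancel norm_triangle_ineq)
    ultimately have "2 ^ l * norm y \<le> B + norm (int_vec k)" by simp
    with y show False by (simp add: field_simps)
  qed
qed

lemma integral_dyadic_atom:
  fixes \<Theta> :: "real^'n::finite \<Rightarrow> real"
  shows "(\<integral>x. dyadic_atom \<Theta> l k x \<partial>lborel) = 2 powr (- (real l * real CARD('n) / 2)) * (\<integral>x. \<Theta> x \<partial>lborel)"
proof -
  define p :: real where "p = 2 powr (real l * real CARD('n) / 2)"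
  define J where "J = (\<integral>x. \<Theta> (2 ^ l *\<^sub>R x - int_vec k) \<partial>lborel)"
  have "(2::real) ^ (l * CARD('n)) = 2 powr (real l * real CARD('n))"
    by (simp add: powr_realpow[symmetric])
  also have "\<dots> = p * p" unfolding p_def by (simp add: powr_add[symmetric])
  finally have "(\<integral>x. \<Theta> x \<partial>lborel) = p * p * J"
    using integral_lborel_affine[of "2 ^ l" \<Theta> "- int_vec k"] by (simp add: J_def power_mult[symmetric])
  moreover have "2 powr (- (real l * real CARD('n) / 2)) = 1 / p"
    by (simp add: p_def powr_minus_divide)
  moreover have "p \<noteq> 0" by (simp add: p_def)
  ultimately have "2 powr (- (real l * real CARD('n) / 2)) * (\<integral>x. \<Theta> x \<partial>lborel) = p * J"
    by (simp add: power2_eq_square)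
  also have "p * J = (\<integral>x. dyadic_atom \<Theta> l k x \<partial>lborel)"
    by (simp add: dyadic_atom_def p_def J_def)
  finally show ?thesis ..
qed

lemma dyadic_atom_nonzero_imp_dist_le:
  assumes "cont_supp_cball \<Theta> B" "dyadic_atom \<Theta> l k x \<noteq> 0"
  shows "dist x ((1 / 2 ^ l) *\<^sub>R int_vec k) \<le> B / 2 ^ l"
proof -
  have "2 ^ l *\<^sub>R x - int_vec k = 2 ^ l *\<^sub>R (x - (1 / 2 ^ l) *\<^sub>R int_vec k)"
    by (simp add: algebra_simps)
  then have "2 ^ l * dist x ((1 / 2 ^ l) *\<^sub>R int_vec k) = norm (2 ^ l *\<^sub>R x - int_vec k)"
    by (simp add: dist_norm)
  also have "\<dots> \<le> B" by (rule dyadic_atom_nonzeroD[OF assms])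
  finally show ?thesis by (simp add: field_simps)
qed

lemma powr_level_weight: "2 powr (- (real l * (d / 2 + 1))) = 2 powr (- (real l * d / 2)) / 2 ^ l"
proof -
  have "- (real l * (d / 2 + 1)) = - (real l * d / 2) - real l" by (simp add: algebra_simps)
  then have "2 powr (- (real l * (d / 2 + 1))) = 2 powr (- (real l * d / 2)) / 2 powr real l"
    by (simp only: powr_diff)
  also have "(2::real) powr real l = 2 ^ l" by (simp add: powr_realpow)
  finally show ?thesis .
qed

lemma dyadic_atom_lipschitz_pairing:
  fixes \<Theta> v :: "real^'n::finite \<Rightarrow> real"
  assumes \<Theta>: "cont_supp_cball \<Theta> B" and mean_zero: "(\<integral>x. \<Theta> x \<partial>lborel) = 0"
    and v: "L-lipschitz_on UNIV v"
  shows "\<bar>\<integral>x. v x * dyadic_atom \<Theta> l k x \<partial>lborel\<bar>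
           \<le> L * B * 2 powr (- (real l * (real CARD('n) / 2 + 1))) * (\<integral>x. \<bar>\<Theta> x\<bar> \<partial>lborel)"
proof -
  \<comment> \<open>the mean-zero atom does not see the value of \<open>v\<close> at its centre \<open>x0\<close>\<close>
  define x0 :: "real^'n" where "x0 = (1 / 2 ^ l) *\<^sub>R int_vec k"
  have L: "0 \<le> L" using lipschitz_on_nonneg[OF v] .
  have v_cont: "continuous_on UNIV v" using lipschitz_on_continuous_on[OF v] .
  have atom: "cont_supp_cball (dyadic_atom \<Theta> l k) ((B + norm (int_vec k)) / 2 ^ l)"
    using cont_supp_cball_dyadic_atom[OF \<Theta>] .
  have "(\<integral>x. (v x - v x0) * dyadic_atom \<Theta> l k x \<partial>lborel)
      = (\<integral>x. v x * dyadic_atom \<Theta> l k x \<partial>lborel) - v x0 * (\<integral>x. dyadic_atom \<Theta> l k x \<partial>lborel)"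
    using integrable_continuous_mult_cont_supp_cball[OF atom v_cont] integrable_cont_supp_cball[OF atom]
    by (simp add: left_diff_distrib)
  then have "(\<integral>x. v x * dyadic_atom \<Theta> l k x \<partial>lborel) = (\<integral>x. (v x - v x0) * dyadic_atom \<Theta> l k x \<partial>lborel)"
    by (simp add: integral_dyadic_atom mean_zero)
  also have "\<bar>\<dots>\<bar> \<le> (\<integral>x. L * B / 2 ^ l * dyadic_atom (\<lambda>y. \<bar>\<Theta> y\<bar>) l k x \<partial>lborel)"
  proof (rule integral_abs_bound_integral)
    show "integrable lborel (\<lambda>x. (v x - v x0) * dyadic_atom \<Theta> l k x)"
      by (intro integrable_continuous_mult_cont_supp_cball[OF atom] continuous_on_diff v_cont continuous_on_const)
    show "integrable lborel (\<lambda>x. L * B / 2 ^ l * dyadic_atom (\<lambda>y. \<bar>\<Theta> y\<bar>) l k x)"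
      using integrable_cont_supp_cball[OF cont_supp_cball_dyadic_atom[OF cont_supp_cball_abs[OF \<Theta>]]] by simp
    fix x :: "real^'n"
    show "\<bar>(v x - v x0) * dyadic_atom \<Theta> l k x\<bar> \<le> L * B / 2 ^ l * dyadic_atom (\<lambda>y. \<bar>\<Theta> y\<bar>) l k x"
    proof (cases "dyadic_atom \<Theta> l k x = 0")
      case False
      have "\<bar>v x - v x0\<bar> \<le> L * dist x x0"
        using lipschitz_onD[OF v, of x x0] by (simp add: dist_real_def)
      also have "\<dots> \<le> L * (B / 2 ^ l)"
        using dyadic_atom_nonzero_imp_dist_le[OF \<Theta> False] L unfolding x0_def by (rule mult_left_mono)
      finally have "\<bar>v x - v x0\<bar> * \<bar>dyadic_atom \<Theta> l k x\<bar> \<le> L * B / 2 ^ l * \<bar>dyadic_atom \<Theta> l k x\<bar>"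
        by (intro mult_right_mono) simp_all
      then show ?thesis by (simp add: abs_mult abs_dyadic_atom)
    qed (simp add: abs_dyadic_atom[symmetric])
  qed
  also have "\<dots> = L * B * (2 powr (- (real l * real CARD('n) / 2)) / 2 ^ l) * (\<integral>x. \<bar>\<Theta> x\<bar> \<partial>lborel)"
    by (simp add: integral_dyadic_atom)
  finally show ?thesis by (simp only: powr_level_weight)
qed

definition lattice_count_bound :: "'n::finite itself \<Rightarrow> real \<Rightarrow> nat" where
  "lattice_count_bound _ B = nat (2 * \<lceil>B\<rceil> + 1) ^ CARD('n)"

lemma lattice_points_in_cball:
  fixes y :: "real^'n::finite"
  assumes "0 \<le> B"
  shows "finite {k. norm (y - int_vec k) \<le> B}"
    and "card {k. norm (y - int_vec k) \<le> B} \<le> lattice_count_bound TYPE('n) B"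
proof -
  define T where "T i = {\<lceil>y$i - B\<rceil> .. \<lceil>y$i - B\<rceil> + 2 * \<lceil>B\<rceil>}" for i
  have sub: "{k. norm (y - int_vec k) \<le> B} \<subseteq> PiE UNIV T"
  proof
    fix k assume "k \<in> {k. norm (y - int_vec k) \<le> B}"
    have "k i \<in> T i" for i
    proof -
      have "\<bar>y$i - real_of_int (k i)\<bar> \<le> B"
        using \<open>k \<in> _\<close> component_le_norm_cart[of "y - int_vec k" i] by (simp add: int_vec_def)
      then have "y$i - B \<le> k i" and "k i \<le> y$i + B" by auto
      then have "\<lceil>y$i - B\<rceil> \<le> k i" and "real_of_int (k i) \<le> real_of_int (\<lceil>y$i - B\<rceil> + 2 * \<lceil>B\<rceil>)"
        using le_of_int_ceiling[of "y$i - B"] le_of_int_ceiling[of B] by (simp add: ceiling_le_iff, linarith)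
      then show ?thesis unfolding T_def by (simp only: atLeastAtMost_iff of_int_le_iff)
    qed
    then show "k \<in> PiE UNIV T" by (auto simp: PiE_def extensional_def)
  qed
  have fin: "finite (PiE UNIV T)" by (rule finite_PiE) (auto simp: T_def)
  show "finite {k. norm (y - int_vec k) \<le> B}" by (rule finite_subset[OF sub fin])
  have "card {k. norm (y - int_vec k) \<le> B} \<le> card (PiE UNIV T)" by (rule card_mono[OF fin sub])
  also have "\<dots> = lattice_count_bound TYPE('n) B" by (simp add: card_PiE T_def lattice_count_bound_def)
  finally show "card {k. norm (y - int_vec k) \<le> B} \<le> lattice_count_bound TYPE('n) B" .
qed

lemma sum_dyadic_atoms_at_point_le:
  fixes \<Theta> :: "real^'n::finite \<Rightarrow> real"
  assumes \<Theta>: "cont_supp_cball \<Theta> B" and M: "\<And>y. \<bar>\<Theta> y\<bar> \<le> M" and F: "finite F"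
    and w_nonneg: "\<And>k. 0 \<le> w k" and W: "0 \<le> W" "\<And>k. dyadic_atom \<Theta> l k x \<noteq> 0 \<Longrightarrow> w k \<le> W"
  shows "(\<Sum>k\<in>F. w k * \<bar>dyadic_atom \<Theta> l k x\<bar>)
           \<le> real (lattice_count_bound TYPE('n) B) * (W * (2 powr (real l * real CARD('n) / 2) * M))"
proof -
  define K where "K = {k. norm (2 ^ l *\<^sub>R x - int_vec k) \<le> B}"
  define A where "A = 2 powr (real l * real CARD('n) / 2) * M"
  have K: "finite K" "card K \<le> lattice_count_bound TYPE('n) B"
    using lattice_points_in_cball \<Theta> unfolding K_def cont_supp_cball_def by auto
  have "0 \<le> M" using M[of 0] by linarith
  then have A: "0 \<le> A" by (simp add: A_def)
  have "(\<Sum>k\<in>F. w k * \<bar>dyadic_atom \<Theta> l k x\<bar>) = (\<Sum>k\<in>F \<inter> K. w k * \<bar>dyadic_atom \<Theta> l k x\<bar>)"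
    using F by (intro sum.mono_neutral_right) (auto simp: K_def dest: dyadic_atom_nonzeroD[OF \<Theta>])
  also have "\<dots> \<le> (\<Sum>k\<in>K. w k * \<bar>dyadic_atom \<Theta> l k x\<bar>)"
    using K w_nonneg by (intro sum_mono2) auto
  also have "\<dots> \<le> (\<Sum>k\<in>K. W * A)"
  proof (rule sum_mono)
    fix k
    have "\<bar>dyadic_atom \<Theta> l k x\<bar> \<le> A"
      unfolding dyadic_atom_def abs_mult A_def by (simp add: M mult_left_mono)
    then show "w k * \<bar>dyadic_atom \<Theta> l k x\<bar> \<le> W * A"
      using W w_nonneg[of k] A by (cases "dyadic_atom \<Theta> l k x = 0") (auto intro: mult_mono)
  qed
  also have "\<dots> \<le> real (lattice_count_bound TYPE('n) B) * (W * A)"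
    using K W A by (simp add: mult_right_mono)
  finally show ?thesis unfolding A_def .
qed

definition dyadic_grid :: "nat \<Rightarrow> ('n::finite \<Rightarrow> int) set" where
  "dyadic_grid l = PiE UNIV (\<lambda>_. {0..<2 ^ l})"

lemma finite_dyadic_grid: "finite (dyadic_grid l :: ('n::finite \<Rightarrow> int) set)"
  unfolding dyadic_grid_def by (intro finite_PiE) auto

lemma card_dyadic_grid: "card (dyadic_grid l :: ('n::finite \<Rightarrow> int) set) = 2 ^ (l * CARD('n))"
  by (simp add: dyadic_grid_def card_PiE power_mult nat_power_eq)

lemma dyadic_atom_nonzero_imp_mem_cbox:
  fixes \<Theta> :: "real^'n::finite \<Rightarrow> real"
  assumes \<Theta>: "cont_supp_cball \<Theta> B" and k: "k \<in> dyadic_grid l"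
    and nz: "dyadic_atom \<Theta> l k x \<noteq> 0"
  shows "x \<in> cbox (\<chi> i. - B) (\<chi> i. 1 + B)"
proof -
  have "- B \<le> x$i \<and> x$i \<le> 1 + B" for i
  proof -
    have "\<bar>2 ^ l * x$i - real_of_int (k i)\<bar> \<le> B"
      using component_le_norm_cart[of "2 ^ l *\<^sub>R x - int_vec k" i] dyadic_atom_nonzeroD[OF \<Theta> nz]
      by (simp add: int_vec_def)
    moreover have "0 \<le> k i" "k i < 2 ^ l" using k by (auto simp: dyadic_grid_def PiE_def Pi_def)
    then have "0 \<le> k i" "k i + 1 \<le> 2 ^ l" by simp_all
    then have "0 \<le> real_of_int (k i)" "real_of_int (k i) + 1 \<le> 2 ^ l"
      using of_int_le_iff[of "k i + 1" "2 ^ l", where 'a=real] by simp_all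
    moreover have "B \<le> 2 ^ l * B" using \<Theta> by (simp add: cont_supp_cball_def mult_le_cancel_right1)
    moreover have "2 ^ l * (- B) = - (2 ^ l * B)" "2 ^ l * (1 + B) = 2 ^ l + 2 ^ l * B"
      by (simp_all add: algebra_simps)
    ultimately have lo: "2 ^ l * (- B) \<le> 2 ^ l * x$i" and hi: "2 ^ l * x$i \<le> 2 ^ l * (1 + B)"
      unfolding abs_le_iff by linarith+
    show ?thesis using mult_left_le_imp_le[OF lo] mult_left_le_imp_le[OF hi] by simp
  qed
  then show ?thesis by (simp add: mem_box_cart)
qed

lemma wip_indicator_dyadic_atom:
  fixes \<Theta> :: "real^'n::finite \<Rightarrow> real"
  assumes \<Theta>: "cont_supp_cball \<Theta> B" and k: "k \<in> dyadic_grid l"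
  shows "wip (indicator (cbox (\<chi> i. - B) (\<chi> i. 1 + B))) (dyadic_atom \<Theta> l k)
           = 2 powr (- (real l * real CARD('n) / 2)) * (\<integral>x. \<Theta> x \<partial>lborel)"
proof -
  have "(\<lambda>x. indicator (cbox (\<chi> i. - B) (\<chi> i. 1 + B)) x * dyadic_atom \<Theta> l k x) = dyadic_atom \<Theta> l k"
    using dyadic_atom_nonzero_imp_mem_cbox[OF \<Theta> k] by (auto simp: indicator_def fun_eq_iff)
  then show ?thesis by (simp add: wip_def integral_dyadic_atom)
qed

lemma sum_sq_wip_indicator_dyadic_grid:
  fixes \<Theta> :: "real^'n::finite \<Rightarrow> real"
  assumes \<Theta>: "cont_supp_cball \<Theta> B"
  shows "(\<Sum>k\<in>dyadic_grid l. (wip (indicator (cbox (\<chi> i. - B) (\<chi> i. 1 + B))) (dyadic_atom \<Theta> l k))\<^sup>2)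
           = (\<integral>x. \<Theta> x \<partial>lborel)\<^sup>2"
proof -
  have "(2 powr (- (real l * real CARD('n) / 2)))\<^sup>2 = 1 / 2 ^ (l * CARD('n))"
    by (simp add: power2_eq_square powr_add[symmetric] powr_minus_divide powr_realpow[symmetric])
  then show ?thesis
    by (simp add: wip_indicator_dyadic_atom[OF \<Theta>] card_dyadic_grid power_mult_distrib)
qed

section \<open>Tensor-product wavelets\<close>

lemma cont_supp_cball_tensor:
  fixes f :: "'n::finite \<Rightarrow> real \<Rightarrow> real"
  assumes f: "\<And>i. cont_supp_cball (f i) B"
  shows "cont_supp_cball (\<lambda>y::real^'n. \<Prod>i\<in>UNIV. f i (y$i)) (real CARD('n) * B)"
  unfolding cont_supp_cball_def
proof (intro conjI allI impI)
  have B: "0 \<le> B" using f unfolding cont_supp_cball_def by blast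
  show "continuous_on UNIV (\<lambda>y::real^'n. \<Prod>i\<in>UNIV. f i (y$i))"
  proof (rule continuous_on_prod)
    fix i
    have "continuous_on UNIV (f i)" using f unfolding cont_supp_cball_def by blast
    then show "continuous_on UNIV (\<lambda>y::real^'n. f i (y$i))"
      by (rule continuous_on_compose2[OF _ continuous_on_component]) auto
  qed
  show "0 \<le> real CARD('n) * B" using B by simp
  fix y :: "real^'n" assume y: "real CARD('n) * B < norm y"
  have "\<exists>i. B < \<bar>y$i\<bar>"
  proof (rule ccontr)
    assume "\<not> (\<exists>i. B < \<bar>y$i\<bar>)"
    then have "(\<Sum>i\<in>UNIV. \<bar>y$i\<bar>) \<le> (\<Sum>i\<in>(UNIV::'n set). B)" by (intro sum_mono) (simp add: not_less)
    then have "norm y \<le> real CARD('n) * B" using norm_le_l1_cart[of y] by simp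
    with y show False by simp
  qed
  then obtain i where "B < \<bar>y$i\<bar>" by blast
  then have "f i (y$i) = 0" using f[of i] unfolding cont_supp_cball_def by simp
  then show "(\<Prod>i\<in>UNIV. f i (y$i)) = 0" by (metis UNIV_I finite prod_zero_iff)
qed

lemma abs_tensor_le:
  fixes f :: "'n::finite \<Rightarrow> real \<Rightarrow> real"
  assumes "\<And>i t. \<bar>f i t\<bar> \<le> m"
  shows "\<bar>\<Prod>i\<in>UNIV. f i (y$i)\<bar> \<le> m ^ CARD('n)"
proof -
  have "\<bar>\<Prod>i\<in>UNIV. f i (y$i)\<bar> = (\<Prod>i\<in>UNIV. \<bar>f i (y$i)\<bar>)" by (simp add: abs_prod)
  also have "\<dots> \<le> (\<Prod>i\<in>(UNIV::'n set). m)" by (intro prod_mono) (simp add: assms)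
  finally show ?thesis by simp
qed

definition phi_tensor :: "(real \<Rightarrow> real) \<Rightarrow> real^'n::finite \<Rightarrow> real" where
  "phi_tensor \<phi>0 y = (\<Prod>i\<in>UNIV. \<phi>0 (y$i))"

lemma phi_k_eq_dyadic_atom: "phi_k \<phi>0 k = dyadic_atom (phi_tensor \<phi>0) 0 k"
  by (simp add: fun_eq_iff phi_k_def dyadic_atom_def phi_tensor_def int_vec_def)

lemma psi_lk_eq_dyadic_atom: "psi_lk \<phi>0 \<psi>0 l \<iota> k = dyadic_atom (psi_type \<phi>0 \<psi>0 \<iota>) l k"
  by (simp add: fun_eq_iff psi_lk_def dyadic_atom_def)

lemma wsys_Inl: "wsys \<phi>0 \<psi>0 (Inl k) = dyadic_atom (phi_tensor \<phi>0) 0 k"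
  by (simp add: wsys_def phi_k_eq_dyadic_atom)

lemma wsys_Inr: "wsys \<phi>0 \<psi>0 (Inr (l, \<iota>, k)) = dyadic_atom (psi_type \<phi>0 \<psi>0 \<iota>) l k"
  by (simp add: wsys_def psi_lk_eq_dyadic_atom)

type_synonym 'n wavelet_index = "('n \<Rightarrow> int) + (nat \<times> ('n \<Rightarrow> bool) \<times> ('n \<Rightarrow> int))"

definition coef_weight :: "real \<Rightarrow> 'n::finite wavelet_index \<Rightarrow> real" where
  "coef_weight s a = (case a of Inl k \<Rightarrow> 1 + s * norm (int_vec k)
     | Inr (l, _, _) \<Rightarrow> 2 powr (- (real l * (real CARD('n) / 2 + 1))))"

lemma coef_weight_nonneg: "0 \<le> s \<Longrightarrow> 0 \<le> coef_weight s a"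
  by (auto simp: coef_weight_def split: sum.splits prod.splits)

lemma sum_over_sum_type:
  fixes F :: "('a + 'b) set"
  assumes "finite F"
  shows "sum g F = (\<Sum>k\<in>Inl -` F. g (Inl k)) + (\<Sum>p\<in>Inr -` F. g (Inr p))"
proof -
  have e: "F = (Inl -` F) <+> (Inr -` F)"
  proof (rule set_eqI)
    fix a show "a \<in> F \<longleftrightarrow> a \<in> (Inl -` F) <+> (Inr -` F)" by (cases a) auto
  qed
  have f: "finite (Inl -` F)" "finite (Inr -` F)"
    using assms by (auto intro: finite_vimageI inj_onI)
  show ?thesis by (subst e, subst sum.Plus[OF f]) (simp add: o_def)
qed

lemma sum_geometric_half_le: "finite L \<Longrightarrow> (\<Sum>l\<in>L. (1/2::real) ^ l) \<le> 2"
proof -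
  assume "finite L"
  then obtain n where "L \<subseteq> {..<n}" by (meson finite_nat_iff_bounded)
  then have "(\<Sum>l\<in>L. (1/2::real) ^ l) \<le> (\<Sum>l<n. (1/2::real) ^ l)" by (intro sum_mono2) auto
  also have "\<dots> = 2 - 2 * (1/2) ^ n" by (induction n) (auto simp: field_simps)
  also have "\<dots> \<le> 2" by simp
  finally show ?thesis .
qed

section \<open>Orthonormal bases\<close>

lemma integrable_mult_square_integrable:
  fixes u w :: "'a::euclidean_space \<Rightarrow> real"
  assumes "square_integrable u" "square_integrable w"
  shows "integrable lborel (\<lambda>x. u x * w x)"
proof -
  have m: "u \<in> borel_measurable lborel" "w \<in> borel_measurable lborel"
    and i: "integrable lborel (\<lambda>x. (u x)\<^sup>2)" "integrable lborel (\<lambda>x. (w x)\<^sup>2)"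
    using assms unfolding square_integrable_def by auto
  have ii: "integrable lborel (\<lambda>x. (u x)\<^sup>2 + (w x)\<^sup>2)" using i by simp
  show ?thesis
  proof (rule Bochner_Integration.integrable_bound[OF ii])
    show "(\<lambda>x. u x * w x) \<in> borel_measurable lborel" using m by simp
    have "\<bar>u x * w x\<bar> \<le> (u x)\<^sup>2 + (w x)\<^sup>2" for x
    proof -
      have "0 \<le> (\<bar>u x\<bar> - \<bar>w x\<bar>)\<^sup>2" by simp
      then have "2 * (\<bar>u x\<bar> * \<bar>w x\<bar>) \<le> (u x)\<^sup>2 + (w x)\<^sup>2" by (simp add: power2_eq_square algebra_simps)
      moreover have "0 \<le> \<bar>u x\<bar> * \<bar>w x\<bar>" by simp
      ultimately have "\<bar>u x\<bar> * \<bar>w x\<bar> \<le> (u x)\<^sup>2 + (w x)\<^sup>2" by linarith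
      then show ?thesis by (simp add: abs_mult)
    qed
    then show "AE x in lborel. norm (u x * w x) \<le> norm ((u x)\<^sup>2 + (w x)\<^sup>2)" by simp
  qed
qed

lemma square_integrable_add_mult:
  assumes u: "square_integrable u" and w: "square_integrable w"
  shows "square_integrable (\<lambda>x. u x + t * w x)"
proof -
  have "(\<lambda>x. (u x + t * w x)\<^sup>2) = (\<lambda>x. (u x)\<^sup>2 + 2 * t * (u x * w x) + t\<^sup>2 * (w x)\<^sup>2)"
    by (simp add: fun_eq_iff power2_sum power_mult_distrib algebra_simps)
  then show ?thesis
    using u w integrable_mult_square_integrable[OF u w] unfolding square_integrable_def by auto
qed

text \<open>Polarization: Parseval's identity for \<open>u + w\<close> and \<open>u - w\<close>.\<close>
lemma ONB_has_sum_coef_mult: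
  fixes b :: "'i \<Rightarrow> 'a::euclidean_space \<Rightarrow> real"
  assumes onb: "is_ONB b I" and u: "square_integrable u" and w: "square_integrable w"
  shows "((\<lambda>a. wip u (b a) * wip w (b a)) has_sum (\<integral>x. u x * w x \<partial>lborel)) I"
proof -
  have u2: "integrable lborel (\<lambda>x. (u x)\<^sup>2)" and w2: "integrable lborel (\<lambda>x. (w x)\<^sup>2)"
    and uw: "integrable lborel (\<lambda>x. u x * w x)"
    using u w integrable_mult_square_integrable[OF u w] by (auto simp: square_integrable_def)
  have parseval: "((\<lambda>a. (wip u (b a) + t * wip w (b a))\<^sup>2) has_sum
      ((\<integral>x. (u x)\<^sup>2 \<partial>lborel) + 2 * t * (\<integral>x. u x * w x \<partial>lborel) + t\<^sup>2 * (\<integral>x. (w x)\<^sup>2 \<partial>lborel))) I" for t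
  proof -
    have lin: "wip (\<lambda>x. u x + t * w x) (b a) = wip u (b a) + t * wip w (b a)" if "a \<in> I" for a
    proof -
      have "square_integrable (b a)" using onb that by (simp add: is_ONB_def)
      then have "integrable lborel (\<lambda>x. u x * b a x)" "integrable lborel (\<lambda>x. w x * b a x)"
        using integrable_mult_square_integrable u w by blast+
      then show ?thesis unfolding wip_def by (simp add: algebra_simps)
    qed
    have "(\<integral>x. (u x + t * w x)\<^sup>2 \<partial>lborel)
        = (\<integral>x. (u x)\<^sup>2 + 2 * t * (u x * w x) + t\<^sup>2 * (w x)\<^sup>2 \<partial>lborel)"
      by (intro Bochner_Integration.integral_cong) (simp_all add: power2_sum power_mult_distrib algebra_simps)
    also have "\<dots> = (\<integral>x. (u x)\<^sup>2 \<partial>lborel) + 2 * t * (\<integral>x. u x * w x \<partial>lborel) + t\<^sup>2 * (\<integral>x. (w x)\<^sup>2 \<partial>lborel)"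
      using u2 w2 uw by simp
    finally have int_sq: "(\<integral>x. (u x + t * w x)\<^sup>2 \<partial>lborel)
        = (\<integral>x. (u x)\<^sup>2 \<partial>lborel) + 2 * t * (\<integral>x. u x * w x \<partial>lborel) + t\<^sup>2 * (\<integral>x. (w x)\<^sup>2 \<partial>lborel)" .
    have "((\<lambda>a. (wip (\<lambda>x. u x + t * w x) (b a))\<^sup>2) has_sum (\<integral>x. (u x + t * w x)\<^sup>2 \<partial>lborel)) I"
      using onb square_integrable_add_mult[OF u w] by (simp add: is_ONB_def)
    then show ?thesis unfolding int_sq by (rule has_sum_cong[THEN iffD1, rotated]) (simp add: lin)
  qed
  have val: "(A + 2 * 1 * U + 1\<^sup>2 * W) + - (A + 2 * (- 1) * U + (- 1)\<^sup>2 * W) = 4 * U" for A U W :: real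
    by simp
  have e: "1 / 4 * ((p + 1 * q)\<^sup>2 + - (p + - 1 * q)\<^sup>2) = p * q" for p q :: real
    by (simp add: power2_eq_square algebra_simps)
  have "((\<lambda>a. (wip u (b a) + 1 * wip w (b a))\<^sup>2 + - (wip u (b a) + - 1 * wip w (b a))\<^sup>2) has_sum
      4 * (\<integral>x. u x * w x \<partial>lborel)) I"
    using has_sum_add[OF parseval[of 1] has_sum_uminusI[OF parseval[of "- 1"]], unfolded val] .
  then have "((\<lambda>a. 1 / 4 * ((wip u (b a) + 1 * wip w (b a))\<^sup>2 + - (wip u (b a) + - 1 * wip w (b a))\<^sup>2))
      has_sum 1 / 4 * (4 * (\<integral>x. u x * w x \<partial>lborel))) I"
    by (rule has_sum_cmult_right)
  then have "((\<lambda>a. wip u (b a) * wip w (b a)) has_sum 1 / 4 * (4 * (\<integral>x. u x * w x \<partial>lborel))) I"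
    by (simp only: e)
  then show ?thesis by simp
qed

lemma ONB_integral_mult_le:
  assumes "is_ONB b I" "square_integrable v" "square_integrable w"
    and "\<And>F. finite F \<Longrightarrow> F \<subseteq> I \<Longrightarrow> (\<Sum>a\<in>F. \<bar>wip v (b a)\<bar> * \<bar>wip w (b a)\<bar>) \<le> M"
  shows "(\<integral>x. v x * w x \<partial>lborel) \<le> M"
proof (rule has_sum_le_finite_sums[OF ONB_has_sum_coef_mult[OF assms(1-3)]])
  fix F assume "finite F" "F \<subseteq> I"
  have "(\<Sum>a\<in>F. wip v (b a) * wip w (b a)) \<le> (\<Sum>a\<in>F. \<bar>wip v (b a)\<bar> * \<bar>wip w (b a)\<bar>)"
    by (intro sum_mono) (simp add: abs_mult[symmetric])
  also have "\<dots> \<le> M" using assms(4) \<open>finite F\<close> \<open>F \<subseteq> I\<close> .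
  finally show "(\<Sum>a\<in>F. wip v (b a) * wip w (b a)) \<le> M" .
qed

lemma ONB_integral_sq_le:
  assumes onb: "is_ONB b I" and v: "square_integrable v" and \<epsilon>: "0 \<le> \<epsilon>"
    and coef: "\<And>a. a \<in> I \<Longrightarrow> \<bar>wip v (b a)\<bar> \<le> \<epsilon> * w a"
    and M: "\<And>F. finite F \<Longrightarrow> F \<subseteq> I \<Longrightarrow> (\<Sum>a\<in>F. w a * \<bar>wip v (b a)\<bar>) \<le> M"
  shows "(\<integral>x. v x * v x \<partial>lborel) \<le> \<epsilon> * M"
proof (rule ONB_integral_mult_le[OF onb v v])
  fix F assume F: "finite F" "F \<subseteq> I"
  have "(\<Sum>a\<in>F. \<bar>wip v (b a)\<bar> * \<bar>wip v (b a)\<bar>) \<le> (\<Sum>a\<in>F. \<epsilon> * (w a * \<bar>wip v (b a)\<bar>))"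
  proof (rule sum_mono)
    fix a assume "a \<in> F"
    then have "\<bar>wip v (b a)\<bar> * \<bar>wip v (b a)\<bar> \<le> \<epsilon> * w a * \<bar>wip v (b a)\<bar>"
      using F coef by (intro mult_right_mono) auto
    then show "\<bar>wip v (b a)\<bar> * \<bar>wip v (b a)\<bar> \<le> \<epsilon> * (w a * \<bar>wip v (b a)\<bar>)" by (simp only: mult.assoc)
  qed
  also have "\<dots> = \<epsilon> * (\<Sum>a\<in>F. w a * \<bar>wip v (b a)\<bar>)" by (simp add: sum_distrib_left)
  also have "\<dots> \<le> \<epsilon> * M" using M[OF F] \<epsilon> by (rule mult_left_mono)
  finally show "(\<Sum>a\<in>F. \<bar>wip v (b a)\<bar> * \<bar>wip v (b a)\<bar>) \<le> \<epsilon> * M" .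
qed

lemma ONB_bessel:
  assumes "is_ONB b I" "square_integrable u" "finite F" "F \<subseteq> I"
  shows "(\<Sum>a\<in>F. (wip u (b a))\<^sup>2) \<le> (\<integral>x. (u x)\<^sup>2 \<partial>lborel)"
  using assms by (intro finite_sum_le_has_sum) (auto simp: is_ONB_def)

section \<open>Cutoffs and truncations\<close>

lemma integrable_if_weighted_integrable:
  fixes u :: "'a::euclidean_space \<Rightarrow> real"
  assumes u: "u \<in> borel_measurable lborel" "integrable lborel (\<lambda>x. (1 + s * norm x) * \<bar>u x\<bar>)" and s: "0 \<le> s"
  shows "integrable lborel u"
proof -
  have "\<bar>u x\<bar> \<le> \<bar>(1 + s * norm x) * \<bar>u x\<bar>\<bar>" for x using s by (simp add: mult_le_cancel_right1)
  then have "AE x in lborel. norm (u x) \<le> norm ((1 + s * norm x) * \<bar>u x\<bar>)" by simp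
  then show ?thesis by (rule Bochner_Integration.integrable_bound[OF u(2) u(1)])
qed

definition radial_cutoff :: "real \<Rightarrow> 'a::euclidean_space \<Rightarrow> real" where
  "radial_cutoff R x = max 0 (min 1 (2 - norm x / R))"

lemma radial_cutoff_bounds: "0 \<le> radial_cutoff R x" "radial_cutoff R x \<le> 1"
  unfolding radial_cutoff_def by auto

lemma radial_cutoff_eq_1: "0 < R \<Longrightarrow> norm x \<le> R \<Longrightarrow> radial_cutoff R x = 1"
  unfolding radial_cutoff_def by (auto simp: field_simps max_def min_def)

lemma radial_cutoff_eq_0: "0 < R \<Longrightarrow> 2 * R < norm x \<Longrightarrow> radial_cutoff R x = 0"
  unfolding radial_cutoff_def by (auto simp: field_simps max_def min_def)

lemma lipschitz_radial_cutoff: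
  assumes R: "0 < R"
  shows "(1 / R)-lipschitz_on UNIV (radial_cutoff R :: 'a::euclidean_space \<Rightarrow> real)"
proof (rule lipschitz_onI)
  fix x y :: 'a
  have m1: "\<bar>max 0 p - max 0 q\<bar> \<le> \<bar>p - q\<bar>" for p q :: real by (simp add: max_def abs_if)
  have m2: "\<bar>min 1 p - min 1 q\<bar> \<le> \<bar>p - q\<bar>" for p q :: real by (simp add: min_def abs_if)
  have "\<bar>radial_cutoff R x - radial_cutoff R y\<bar> \<le> \<bar>(2 - norm x / R) - (2 - norm y / R)\<bar>"
    unfolding radial_cutoff_def using m1 m2 order_trans by blast
  also have "(2 - norm x / R) - (2 - norm y / R) = (norm y - norm x) / R" by (simp add: diff_divide_distrib)
  then have "\<bar>(2 - norm x / R) - (2 - norm y / R)\<bar> = \<bar>norm y - norm x\<bar> / R" using R by simp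
  also have "\<dots> \<le> norm (y - x) / R" using R by (intro divide_right_mono norm_triangle_ineq3) auto
  finally show "dist (radial_cutoff R x) (radial_cutoff R y) \<le> 1 / R * dist x y"
    by (simp add: dist_norm norm_minus_commute dist_real_def)
qed (use R in simp)

lemma cont_supp_radial_cutoff:
  "0 < R \<Longrightarrow> cont_supp_cball (radial_cutoff R :: 'a::euclidean_space \<Rightarrow> real) (2 * R)"
  unfolding cont_supp_cball_def
  by (auto intro: lipschitz_on_continuous_on[OF lipschitz_radial_cutoff] radial_cutoff_eq_0)

lemma integral_radial_cutoff_le:
  assumes R: "0 < R"
  shows "(\<integral>x. radial_cutoff R (x::'a::euclidean_space) \<partial>lborel) \<le> measure lborel (cball (0::'a) (2 * R))"
proof -
  have "(\<integral>x. radial_cutoff R (x::'a) \<partial>lborel) \<le> (\<integral>x. indicator (cball (0::'a) (2 * R)) x \<partial>lborel)"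
  proof (rule integral_mono)
    show "integrable lborel (radial_cutoff R :: 'a \<Rightarrow> real)"
      by (rule integrable_cont_supp_cball[OF cont_supp_radial_cutoff[OF R]])
    show "integrable lborel (\<lambda>x. indicator (cball (0::'a) (2 * R)) x :: real)"
      using emeasure_lborel_cball_finite by (intro integrable_real_indicator) (auto simp: top.not_eq_extremum)
    show "radial_cutoff R x \<le> indicator (cball 0 (2 * R)) x" for x :: 'a
      using radial_cutoff_bounds[of R x] radial_cutoff_eq_0[OF R, of x] by (auto simp: indicator_def)
  qed
  then show ?thesis by simp
qed

lemma measure_cball_le_integral_radial_cutoff_sq:
  assumes R: "0 < R"
  shows "measure lborel (cball (0::'a::euclidean_space) R) \<le> (\<integral>x. radial_cutoff R (x::'a) * radial_cutoff R x \<partial>lborel)"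
proof -
  have "(\<integral>x. indicator (cball (0::'a) R) x \<partial>lborel) \<le> (\<integral>x. radial_cutoff R (x::'a) * radial_cutoff R x \<partial>lborel)"
  proof (rule integral_mono)
    show "integrable lborel (\<lambda>x. radial_cutoff R x * radial_cutoff R (x::'a))"
      using cont_supp_radial_cutoff[OF R] lipschitz_on_continuous_on[OF lipschitz_radial_cutoff[OF R]]
      by (rule integrable_continuous_mult_cont_supp_cball)
    show "integrable lborel (\<lambda>x. indicator (cball (0::'a) R) x :: real)"
      using emeasure_lborel_cball_finite by (intro integrable_real_indicator) (auto simp: top.not_eq_extremum)
    show "indicator (cball 0 R) x \<le> radial_cutoff R x * radial_cutoff R x" for x :: 'a
      using radial_cutoff_bounds[of R x] radial_cutoff_eq_1[OF R, of x] by (auto simp: indicator_def)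
  qed
  then show ?thesis by simp
qed

lemma square_integrable_mult_radial_cutoff:
  fixes h :: "'a::euclidean_space \<Rightarrow> real"
  assumes h: "continuous_on UNIV h" and R: "0 < R"
  shows "square_integrable (\<lambda>x. h x * radial_cutoff R x)"
proof -
  have cont: "continuous_on UNIV (\<lambda>x. h x * radial_cutoff R x)"
    by (intro continuous_on_mult h lipschitz_on_continuous_on[OF lipschitz_radial_cutoff[OF R]])
  have supp: "cont_supp_cball (\<lambda>x. h x * radial_cutoff R x) (2 * R)"
    unfolding cont_supp_cball_def using cont R radial_cutoff_eq_0[OF R] by auto
  show ?thesis
    unfolding square_integrable_def power2_eq_square
    using integrable_continuous_mult_cont_supp_cball[OF supp cont] cont_supp_cball_measurable[OF supp]
    by simp
qed

lemma abs_diff_mult_radial_cutoff_le: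
  fixes h :: "'a::euclidean_space \<Rightarrow> real"
  assumes h: "1-lipschitz_on UNIV h" and h_le: "\<And>x. \<bar>h x\<bar> \<le> norm x + c"
    and R: "0 < R" "c \<le> R" and y: "norm y \<le> 2 * R"
  shows "\<bar>h x * radial_cutoff R x - h y * radial_cutoff R y\<bar> \<le> 4 * dist x y"
proof -
  have "h x * radial_cutoff R x - h y * radial_cutoff R y
      = (h x - h y) * radial_cutoff R x + h y * (radial_cutoff R x - radial_cutoff R y)"
    by (simp add: algebra_simps)
  then have "\<bar>h x * radial_cutoff R x - h y * radial_cutoff R y\<bar>
      \<le> \<bar>h x - h y\<bar> * radial_cutoff R x + \<bar>h y\<bar> * \<bar>radial_cutoff R x - radial_cutoff R y\<bar>"
    by (metis abs_mult abs_triangle_ineq abs_of_nonneg radial_cutoff_bounds(1))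
  also have "\<dots> \<le> dist x y * 1 + (3 * R) * (1 / R * dist x y)"
  proof (rule add_mono)
    show "\<bar>h x - h y\<bar> * radial_cutoff R x \<le> dist x y * 1"
      using lipschitz_onD[OF h, of x y] radial_cutoff_bounds[of R x]
      by (intro mult_mono) (auto simp: dist_real_def)
    have "\<bar>h y\<bar> \<le> 3 * R" using h_le[of y] y R by linarith
    moreover have "\<bar>radial_cutoff R x - radial_cutoff R y\<bar> \<le> 1 / R * dist x y"
      using lipschitz_onD[OF lipschitz_radial_cutoff[OF R(1)], of x y] by (simp add: dist_real_def)
    ultimately show "\<bar>h y\<bar> * \<bar>radial_cutoff R x - radial_cutoff R y\<bar> \<le> (3 * R) * (1 / R * dist x y)"
      by (intro mult_mono) auto
  qed
  also have "\<dots> = 4 * dist x y" using R by (simp add: field_simps)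
  finally show ?thesis .
qed

lemma lipschitz_mult_radial_cutoff:
  fixes h :: "'a::euclidean_space \<Rightarrow> real"
  assumes h: "1-lipschitz_on UNIV h" and h_le: "\<And>x. \<bar>h x\<bar> \<le> norm x + c" and R: "0 < R" "c \<le> R"
  shows "4-lipschitz_on UNIV (\<lambda>x. h x * radial_cutoff R x)"
proof (rule lipschitz_onI)
  fix x y :: 'a
  note near = abs_diff_mult_radial_cutoff_le[OF h h_le R]
  consider "norm y \<le> 2 * R" | "norm x \<le> 2 * R" | "2 * R < norm x" "2 * R < norm y" by linarith
  then have "\<bar>h x * radial_cutoff R x - h y * radial_cutoff R y\<bar> \<le> 4 * dist x y"
  proof cases
    case 2
    then show ?thesis using near[of x y] by (simp add: abs_minus_commute dist_commute)
  next
    case 3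
    then have "radial_cutoff R x = 0" "radial_cutoff R y = 0" using radial_cutoff_eq_0[OF R(1)] by auto
    then show ?thesis by simp
  qed (rule near)
  then show "dist (h x * radial_cutoff R x) (h y * radial_cutoff R y) \<le> 4 * dist x y"
    by (simp add: dist_real_def)
qed simp

definition truncate :: "nat \<Rightarrow> ('a::real_normed_vector \<Rightarrow> real) \<Rightarrow> 'a \<Rightarrow> real" where
  "truncate n u x = (if norm x \<le> real n \<and> \<bar>u x\<bar> \<le> real n then u x else 0)"

lemma abs_truncate_le: "\<bar>truncate n u x\<bar> \<le> \<bar>u x\<bar>" and abs_diff_truncate_le: "\<bar>u x - truncate n u x\<bar> \<le> \<bar>u x\<bar>"
  by (auto simp: truncate_def)

lemma eventually_truncate_eq: "eventually (\<lambda>n. truncate n u x = u x) sequentially"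
proof (rule eventually_sequentiallyI[of "nat \<lceil>max (norm x) \<bar>u x\<bar>\<rceil>"])
  fix n assume "nat \<lceil>max (norm x) \<bar>u x\<bar>\<rceil> \<le> n"
  then have "max (norm x) \<bar>u x\<bar> \<le> real n" by linarith
  then show "truncate n u x = u x" by (simp add: truncate_def)
qed

lemma borel_measurable_truncate [measurable]:
  assumes "u \<in> borel_measurable lborel"
  shows "truncate n u \<in> borel_measurable (lborel :: 'a::euclidean_space measure)"
proof -
  have [measurable]: "u \<in> borel_measurable borel" using assms by simp
  show ?thesis unfolding truncate_def[abs_def] by measurable
qed

lemma square_integrable_truncate:
  fixes u :: "'a::euclidean_space \<Rightarrow> real"
  assumes u: "u \<in> borel_measurable lborel" "integrable lborel u"
  shows "square_integrable (truncate n u)"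
proof -
  have "\<bar>(truncate n u x)\<^sup>2\<bar> \<le> \<bar>real n * \<bar>u x\<bar>\<bar>" for x
  proof (cases "norm x \<le> real n \<and> \<bar>u x\<bar> \<le> real n")
    case True
    then have "\<bar>u x\<bar> * \<bar>u x\<bar> \<le> real n * \<bar>u x\<bar>" by (intro mult_right_mono) auto
    then show ?thesis using True by (simp add: truncate_def power2_eq_square abs_mult)
  qed (auto simp: truncate_def)
  then have ae: "AE x in lborel. norm ((truncate n u x)\<^sup>2) \<le> norm (real n * \<bar>u x\<bar>)" by simp
  have meas: "(\<lambda>x. (truncate n u x)\<^sup>2) \<in> borel_measurable lborel" using u by measurable
  have "integrable lborel (\<lambda>x. (truncate n u x)\<^sup>2)"
    by (rule Bochner_Integration.integrable_bound[OF _ meas ae]) (use u in simp)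
  then show ?thesis unfolding square_integrable_def using u by simp
qed

lemma integrable_weighted_truncation_error:
  fixes u :: "'a::euclidean_space \<Rightarrow> real"
  assumes u: "u \<in> borel_measurable lborel" "integrable lborel (\<lambda>x. (1 + norm x) * \<bar>u x\<bar>)"
  shows "integrable lborel (\<lambda>x. (1 + norm x) * \<bar>u x - truncate n u x\<bar>)"
proof (rule Bochner_Integration.integrable_bound[OF u(2)])
  show "(\<lambda>x. (1 + norm x) * \<bar>u x - truncate n u x\<bar>) \<in> borel_measurable lborel" using u by measurable
  show "AE x in lborel. norm ((1 + norm x) * \<bar>u x - truncate n u x\<bar>) \<le> norm ((1 + norm x) * \<bar>u x\<bar>)"
    using mult_left_mono[OF abs_diff_truncate_le, of "1 + norm _" u _ n] by (intro AE_I2) simp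
qed

lemma tendsto_weighted_truncation_error:
  fixes u :: "'a::euclidean_space \<Rightarrow> real"
  assumes u: "u \<in> borel_measurable lborel" "integrable lborel (\<lambda>x. (1 + norm x) * \<bar>u x\<bar>)"
  shows "(\<lambda>n. \<integral>x. (1 + norm x) * \<bar>u x - truncate n u x\<bar> \<partial>lborel) \<longlonglongrightarrow> 0"
proof -
  have "(\<lambda>n. \<integral>x. (1 + norm x) * \<bar>u x - truncate n u x\<bar> \<partial>lborel) \<longlonglongrightarrow> (\<integral>x. 0 \<partial>(lborel :: 'a measure))"
  proof (rule integral_dominated_convergence[where w="\<lambda>x. (1 + norm x) * \<bar>u x\<bar>"])
    show "integrable lborel (\<lambda>x. (1 + norm x) * \<bar>u x\<bar>)" by (rule u(2))
    show "(\<lambda>x. (1 + norm x) * \<bar>u x - truncate n u x\<bar>) \<in> borel_measurable lborel" for n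
      using u by measurable
    show "AE x in lborel. (\<lambda>n. (1 + norm x) * \<bar>u x - truncate n u x\<bar>) \<longlonglongrightarrow> 0"
    proof (rule AE_I2)
      fix x
      have "eventually (\<lambda>n. (1 + norm x) * \<bar>u x - truncate n u x\<bar> = 0) sequentially"
        using eventually_truncate_eq[of u x] by eventually_elim simp
      then show "(\<lambda>n. (1 + norm x) * \<bar>u x - truncate n u x\<bar>) \<longlonglongrightarrow> 0" by (rule tendsto_eventually)
    qed
    show "AE x in lborel. norm ((1 + norm x) * \<bar>u x - truncate n u x\<bar>) \<le> (1 + norm x) * \<bar>u x\<bar>" for n
    proof (rule AE_I2)
      fix x :: 'a
      show "norm ((1 + norm x) * \<bar>u x - truncate n u x\<bar>) \<le> (1 + norm x) * \<bar>u x\<bar>"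
        using mult_left_mono[OF abs_diff_truncate_le, of "1 + norm x" u x n] by simp
    qed
  qed simp
  then show ?thesis by simp
qed

lemma integrable_linear_growth_mult:
  fixes h u :: "'a::euclidean_space \<Rightarrow> real"
  assumes h: "continuous_on UNIV h" "\<And>x. \<bar>h x\<bar> \<le> norm x + c"
    and u: "u \<in> borel_measurable lborel" "integrable lborel (\<lambda>x. (1 + norm x) * \<bar>u x\<bar>)"
  shows "integrable lborel (\<lambda>x. (norm x + c) * \<bar>u x\<bar>)" and "integrable lborel (\<lambda>x. h x * u x)"
proof -
  have "integrable lborel u" using integrable_if_weighted_integrable[of u 1] u by simp
  moreover have "(\<lambda>x. (norm x + c) * \<bar>u x\<bar>) = (\<lambda>x. (1 + norm x) * \<bar>u x\<bar> + (c - 1) * \<bar>u x\<bar>)"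
    by (simp add: fun_eq_iff algebra_simps)
  ultimately show mom: "integrable lborel (\<lambda>x. (norm x + c) * \<bar>u x\<bar>)" using u by simp
  show "integrable lborel (\<lambda>x. h x * u x)"
  proof (rule Bochner_Integration.integrable_bound[OF mom])
    show "(\<lambda>x. h x * u x) \<in> borel_measurable lborel"
      using u borel_measurable_continuous_onI[OF h(1)] by (simp add: borel_measurable_times)
    have "norm (h x * u x) \<le> norm ((norm x + c) * \<bar>u x\<bar>)" for x
    proof -
      have "0 \<le> norm x + c" using h(2)[of x] by (meson abs_ge_zero order_trans)
      moreover have "\<bar>h x\<bar> * \<bar>u x\<bar> \<le> (norm x + c) * \<bar>u x\<bar>" by (rule mult_right_mono[OF h(2)]) simp
      ultimately show ?thesis by (simp add: abs_mult)
    qed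
    then show "AE x in lborel. norm (h x * u x) \<le> norm ((norm x + c) * \<bar>u x\<bar>)" by simp
  qed
qed

lemma integral_mult_add_const_mean_zero:
  fixes h u :: "'a::euclidean_space \<Rightarrow> real"
  assumes "integrable lborel (\<lambda>x. (h x + c) * u x)" "integrable lborel u" "(\<integral>x. u x \<partial>lborel) = 0"
  shows "(\<integral>x. (h x + c) * u x \<partial>lborel) = (\<integral>x. h x * u x \<partial>lborel)"
proof -
  have "(\<integral>x. h x * u x \<partial>lborel) = (\<integral>x. (h x + c) * u x - c * u x \<partial>lborel)"
    by (simp add: algebra_simps)
  also have "\<dots> = (\<integral>x. (h x + c) * u x \<partial>lborel)" using assms by simp
  finally show ?thesis ..
qed

lemma tendsto_integral_cutoff_truncate:
  fixes h u :: "'a::euclidean_space \<Rightarrow> real"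
  assumes h: "continuous_on UNIV h" "\<And>x. \<bar>h x\<bar> \<le> norm x + c"
    and u: "u \<in> borel_measurable lborel" "integrable lborel (\<lambda>x. (1 + norm x) * \<bar>u x\<bar>)"
  shows "(\<lambda>n. \<integral>x. h x * radial_cutoff (real n) x * truncate n u x \<partial>lborel) \<longlonglongrightarrow> (\<integral>x. h x * u x \<partial>lborel)"
proof (rule integral_dominated_convergence[where w="\<lambda>x. (norm x + c) * \<bar>u x\<bar>"])
  show "integrable lborel (\<lambda>x. (norm x + c) * \<bar>u x\<bar>)" by (rule integrable_linear_growth_mult(1)[OF h u])
  have [measurable]: "h \<in> borel_measurable lborel" "radial_cutoff r \<in> borel_measurable lborel" for r
    using h(1) by (auto simp: radial_cutoff_def[abs_def] intro: borel_measurable_continuous_onI)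
  show "(\<lambda>x. h x * u x) \<in> borel_measurable lborel"
    and "(\<lambda>x. h x * radial_cutoff (real n) x * truncate n u x) \<in> borel_measurable lborel" for n
    using u by measurable
  have "eventually (\<lambda>n. h x * radial_cutoff (real n) x * truncate n u x = h x * u x) sequentially" for x
  proof -
    have "eventually (\<lambda>n. radial_cutoff (real n) x = 1) sequentially"
    proof (rule eventually_sequentiallyI[of "nat \<lceil>max 1 (norm x)\<rceil>"])
      fix n assume "nat \<lceil>max 1 (norm x)\<rceil> \<le> n"
      then have "max 1 (norm x) \<le> real n" by linarith
      then show "radial_cutoff (real n) x = 1" by (intro radial_cutoff_eq_1) auto
    qed
    then show ?thesis using eventually_truncate_eq[of u x] by eventually_elim simp
  qed
  then show "AE x in lborel. (\<lambda>n. h x * radial_cutoff (real n) x * truncate n u x) \<longlonglongrightarrow> h x * u x"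
    by (intro AE_I2 tendsto_eventually)
  show "AE x in lborel. norm (h x * radial_cutoff (real n) x * truncate n u x) \<le> (norm x + c) * \<bar>u x\<bar>" for n
  proof (rule AE_I2)
    fix x
    have "\<bar>h x * radial_cutoff (real n) x\<bar> \<le> \<bar>h x\<bar>"
      using radial_cutoff_bounds[of "real n" x] by (simp add: abs_mult mult_left_le)
    then have hc: "\<bar>h x * radial_cutoff (real n) x\<bar> \<le> norm x + c" using h(2)[of x] by linarith
    then have "0 \<le> norm x + c" by (meson abs_ge_zero order_trans)
    then have "\<bar>h x * radial_cutoff (real n) x\<bar> * \<bar>truncate n u x\<bar> \<le> (norm x + c) * \<bar>u x\<bar>"
      by (rule mult_mono[OF hc abs_truncate_le _ abs_ge_zero])
    then show "norm (h x * radial_cutoff (real n) x * truncate n u x) \<le> (norm x + c) * \<bar>u x\<bar>"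
      by (simp add: abs_mult)
  qed
qed

section \<open>The right-hand side and the Wasserstein distance\<close>

lemma one_le_norm_int_vec:
  assumes "k \<noteq> (\<lambda>_. 0)"
  shows "1 \<le> norm (int_vec k)"
proof -
  obtain i where "k i \<noteq> 0" using assms by auto
  then have "1 \<le> \<bar>real_of_int (k i)\<bar>" by linarith
  also have "\<dots> \<le> norm (int_vec k)" using component_le_norm_cart[of "int_vec k" i] by (simp add: int_vec_def)
  finally show ?thesis .
qed

lemma int_vec_zero: "int_vec (\<lambda>_. 0) = 0"
  by (simp add: int_vec_def vec_eq_iff)

definition rhs_weight :: "'n::finite wavelet_index \<Rightarrow> real" where
  "rhs_weight a = (case a of Inl k \<Rightarrow> norm (int_vec k)
     | Inr (l, _, _) \<Rightarrow> 2 powr (- (real l * (real CARD('n) / 2 + 1))))"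

lemma rhs_weight_nonneg: "0 \<le> rhs_weight a"
  by (auto simp: rhs_weight_def split: sum.splits prod.splits)

lemma rhs_weight_le_coef_weight: "rhs_weight a \<le> coef_weight 1 a"
  by (auto simp: rhs_weight_def coef_weight_def split: sum.splits prod.splits)

definition wavelet_rhs :: "(real \<Rightarrow> real) \<Rightarrow> (real \<Rightarrow> real) \<Rightarrow> (real^'n::finite \<Rightarrow> real) \<Rightarrow> ennreal" where
  "wavelet_rhs \<phi>0 \<psi>0 w =
     (\<Sum>\<^sub>\<infinity>k\<in>UNIV. ennreal (norm (int_vec k) * \<bar>wip w (phi_k \<phi>0 k)\<bar>))
     + (\<Sum>\<^sub>\<infinity>l\<in>UNIV. \<Sum>\<^sub>\<infinity>(\<iota>, k)\<in>wtypes \<times> UNIV.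
          ennreal (2 powr (- (real l * (real CARD('n) / 2 + 1))) * \<bar>wip w (psi_lk \<phi>0 \<psi>0 l \<iota> k)\<bar>))"

lemma sum_le_infsum_ennreal:
  fixes f :: "'a \<Rightarrow> ennreal"
  assumes "finite A" "A \<subseteq> B"
  shows "sum f A \<le> infsum f B"
proof -
  have "sum f A = infsum f A" using assms(1) by simp
  also have "\<dots> \<le> infsum f B"
    by (rule infsum_mono_neutral) (use assms(2) in \<open>auto intro: nonneg_summable_on_complete\<close>)
  finally show ?thesis .
qed

lemma sum_rhs_weight_le_wavelet_rhs:
  fixes w :: "real^'n::finite \<Rightarrow> real"
  assumes F: "finite F" "F \<subseteq> wsys_index"
  shows "ennreal (\<Sum>a\<in>F. rhs_weight a * \<bar>wip w (wsys \<phi>0 \<psi>0 a)\<bar>) \<le> wavelet_rhs \<phi>0 \<psi>0 w"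
proof -
  define G where "G a = rhs_weight a * \<bar>wip w (wsys \<phi>0 \<psi>0 a)\<bar>" for a :: "'n wavelet_index"
  define H where "H l q = ennreal (2 powr (- (real l * (real CARD('n) / 2 + 1)))
                    * \<bar>wip w (psi_lk \<phi>0 \<psi>0 l (fst q) (snd q))\<bar>)" for l and q :: "('n \<Rightarrow> bool) \<times> ('n \<Rightarrow> int)"
  have G: "0 \<le> G a" for a unfolding G_def using rhs_weight_nonneg[of a] by simp
  define F2 where "F2 = Inr -` F"
  define Ls where "Ls = fst ` F2"
  define Q where "Q l = {q. (l, q) \<in> F2}" for l
  have fin: "finite (Inl -` F)" "finite F2" using F unfolding F2_def by (auto intro: finite_vimageI inj_onI)
  have F2: "F2 = Sigma Ls Q" unfolding Ls_def Q_def by force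
  have Q: "finite (Q l)" "Q l \<subseteq> wtypes \<times> UNIV" for l
  proof -
    have "Q l = snd ` (F2 \<inter> {p. fst p = l})" unfolding Q_def by force
    then show "finite (Q l)" using fin(2) by simp
    show "Q l \<subseteq> wtypes \<times> UNIV" using F(2) unfolding Q_def F2_def wsys_index_def by auto
  qed
  have "ennreal (\<Sum>a\<in>F. G a) = (\<Sum>k\<in>Inl -` F. ennreal (G (Inl k))) + (\<Sum>p\<in>F2. ennreal (G (Inr p)))"
    unfolding sum_over_sum_type[OF F(1)] F2_def using G by (simp add: ennreal_plus sum_nonneg sum_ennreal)
  also have "(\<Sum>k\<in>Inl -` F. ennreal (G (Inl k))) \<le> (\<Sum>\<^sub>\<infinity>k\<in>UNIV. ennreal (G (Inl k)))"
    by (rule sum_le_infsum_ennreal[OF fin(1)]) simp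
  also have "\<dots> = (\<Sum>\<^sub>\<infinity>k\<in>UNIV. ennreal (norm (int_vec k) * \<bar>wip w (phi_k \<phi>0 k)\<bar>))"
    by (simp add: G_def rhs_weight_def wsys_def)
  also have "(\<Sum>p\<in>F2. ennreal (G (Inr p))) = (\<Sum>l\<in>Ls. \<Sum>q\<in>Q l. H l q)"
    unfolding F2 using fin(2) Q(1)
    by (subst sum.Sigma) (auto simp: Ls_def G_def H_def rhs_weight_def wsys_def split_def)
  also have "\<dots> \<le> (\<Sum>l\<in>Ls. \<Sum>\<^sub>\<infinity>q\<in>wtypes \<times> UNIV. H l q)"
    by (intro sum_mono sum_le_infsum_ennreal Q)
  also have "\<dots> \<le> (\<Sum>\<^sub>\<infinity>l\<in>UNIV. \<Sum>\<^sub>\<infinity>q\<in>wtypes \<times> UNIV. H l q)"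
    using fin(2) by (intro sum_le_infsum_ennreal) (auto simp: Ls_def)
  finally show ?thesis by (simp add: G_def H_def wavelet_rhs_def split_def)
qed

lemma W1_leI:
  assumes "\<And>h. 1-lipschitz_on UNIV h \<Longrightarrow> (\<integral>x. h x * (g x - f x) \<partial>lborel) \<le> M"
  shows "W1 g f \<le> M"
  unfolding W1_def
proof (rule cSUP_least)
  have "1-lipschitz_on UNIV (\<lambda>_::'a. 0::real)" by (simp add: lipschitz_on_def)
  then show "{h :: 'a \<Rightarrow> real. 1-lipschitz_on UNIV h} \<noteq> {}" by blast
qed (use assms in auto)

lemma integrable_weighted_abs_diff:
  fixes f g :: "'a::euclidean_space \<Rightarrow> real"
  assumes f: "f \<in> borel_measurable lborel" "integrable lborel f" "finite_first_moment f"
    and g: "g \<in> borel_measurable lborel" "integrable lborel g" "finite_first_moment g"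
  shows "integrable lborel (\<lambda>x. (1 + norm x) * \<bar>g x - f x\<bar>)"
proof (rule Bochner_Integration.integrable_bound)
  show "integrable lborel (\<lambda>x. \<bar>g x\<bar> + norm x * \<bar>g x\<bar> + (\<bar>f x\<bar> + norm x * \<bar>f x\<bar>))"
    using f g by (simp add: finite_first_moment_def)
  show "(\<lambda>x. (1 + norm x) * \<bar>g x - f x\<bar>) \<in> borel_measurable lborel" using f g by measurable
  have "(1 + norm x) * \<bar>g x - f x\<bar> \<le> (1 + norm x) * (\<bar>g x\<bar> + \<bar>f x\<bar>)" for x
    by (intro mult_left_mono) auto
  then show "AE x in lborel. norm ((1 + norm x) * \<bar>g x - f x\<bar>)
      \<le> norm (\<bar>g x\<bar> + norm x * \<bar>g x\<bar> + (\<bar>f x\<bar> + norm x * \<bar>f x\<bar>))"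
    by (intro AE_I2) (simp add: algebra_simps)
qed

section \<open>Compactly supported wavelet pairs\<close>

locale compact_wavelet_pair =
  fixes \<phi>0 \<psi>0 :: "real \<Rightarrow> real" and B m :: real
  assumes cont_supp_phi0: "cont_supp_cball \<phi>0 B" and cont_supp_psi0: "cont_supp_cball \<psi>0 B"
    and abs_phi0_le: "\<And>t. \<bar>\<phi>0 t\<bar> \<le> m" and abs_psi0_le: "\<And>t. \<bar>\<psi>0 t\<bar> \<le> m"
begin

lemma cont_supp_phi_tensor: "cont_supp_cball (phi_tensor \<phi>0 :: real^'n::finite \<Rightarrow> real) (real CARD('n) * B)"
  unfolding phi_tensor_def[abs_def] by (rule cont_supp_cball_tensor) (rule cont_supp_phi0)

lemma cont_supp_psi_type: "cont_supp_cball (psi_type \<phi>0 \<psi>0 \<iota> :: real^'n::finite \<Rightarrow> real) (real CARD('n) * B)"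
  unfolding psi_type_def[abs_def] by (rule cont_supp_cball_tensor) (simp add: cont_supp_phi0 cont_supp_psi0)

lemma B_nonneg: "0 \<le> B"
  using cont_supp_phi0 by (simp add: cont_supp_cball_def)

lemma m_nonneg: "0 \<le> m"
  using abs_phi0_le[of 0] by linarith

lemma abs_phi_tensor_le: "\<bar>phi_tensor \<phi>0 (y::real^'n::finite)\<bar> \<le> m ^ CARD('n)"
  unfolding phi_tensor_def by (rule abs_tensor_le) (rule abs_phi0_le)

lemma abs_psi_type_le: "\<bar>psi_type \<phi>0 \<psi>0 \<iota> (y::real^'n::finite)\<bar> \<le> m ^ CARD('n)"
  unfolding psi_type_def by (rule abs_tensor_le) (simp add: abs_phi0_le abs_psi0_le)

lemma cont_supp_wsys:
  obtains R where "cont_supp_cball (wsys \<phi>0 \<psi>0 a :: real^'n::finite \<Rightarrow> real) R"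
proof (cases a)
  case (Inl k)
  then show ?thesis
    using that cont_supp_cball_dyadic_atom[OF cont_supp_phi_tensor] by (auto simp: wsys_Inl)
next
  case (Inr p)
  then obtain l \<iota> k where "a = Inr (l, \<iota>, k)" by (metis prod_cases3)
  then show ?thesis
    using that cont_supp_cball_dyadic_atom[OF cont_supp_psi_type] by (auto simp: wsys_Inr)
qed

lemma sum_scaling_at_point_le:
  fixes x :: "real^'n::finite"
  assumes F: "finite F" and s: "0 \<le> s" and M: "\<And>y. \<bar>phi_tensor \<phi>0 (y::real^'n)\<bar> \<le> M"
  shows "(\<Sum>k\<in>F. (1 + s * norm (int_vec k)) * \<bar>phi_k \<phi>0 k x\<bar>)
           \<le> real (lattice_count_bound TYPE('n) (real CARD('n) * B)) * M * (1 + s * (norm x + real CARD('n) * B))"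
proof -
  have "(\<Sum>k\<in>F. (1 + s * norm (int_vec k)) * \<bar>dyadic_atom (phi_tensor \<phi>0) 0 k x\<bar>)
      \<le> real (lattice_count_bound TYPE('n) (real CARD('n) * B))
          * ((1 + s * (norm x + real CARD('n) * B)) * (2 powr (real 0 * real CARD('n) / 2) * M))"
  proof (rule sum_dyadic_atoms_at_point_le[OF cont_supp_phi_tensor M F])
    show "0 \<le> 1 + s * norm (int_vec k)" for k :: "'n \<Rightarrow> int" using s by simp
    show "0 \<le> 1 + s * (norm x + real CARD('n) * B)"
      using s cont_supp_phi0 by (simp add: cont_supp_cball_def)
    fix k assume "dyadic_atom (phi_tensor \<phi>0) 0 k x \<noteq> 0"
    then have "norm (x - int_vec k) \<le> real CARD('n) * B"
      using dyadic_atom_nonzeroD[OF cont_supp_phi_tensor] by fastforce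
    moreover have "norm (int_vec k) \<le> norm x + norm (x - int_vec k)"
      by (metis norm_triangle_sub add.commute norm_minus_commute)
    ultimately show "1 + s * norm (int_vec k) \<le> 1 + s * (norm x + real CARD('n) * B)"
      using s by (simp add: mult_left_mono)
  qed
  then show ?thesis by (simp add: phi_k_eq_dyadic_atom algebra_simps)
qed

lemma sum_detail_at_point_le:
  fixes x :: "real^'n::finite"
  assumes F: "finite F" and M: "\<And>\<iota> y. \<bar>psi_type \<phi>0 \<psi>0 \<iota> (y::real^'n)\<bar> \<le> M"
  shows "(\<Sum>(l, \<iota>, k)\<in>F. 2 powr (- (real l * (real CARD('n) / 2 + 1))) * \<bar>psi_lk \<phi>0 \<psi>0 l \<iota> k x\<bar>)
           \<le> 2 * real CARD('n \<Rightarrow> bool) * real (lattice_count_bound TYPE('n) (real CARD('n) * B)) * M"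
proof -
  define N where "N = real (lattice_count_bound TYPE('n) (real CARD('n) * B))"
  define Ls where "Ls = fst ` F"
  define Ks where "Ks = (snd \<circ> snd) ` F"
  define h where "h = (\<lambda>(l, \<iota>, k). 2 powr (- (real l * (real CARD('n) / 2 + 1))) * \<bar>psi_lk \<phi>0 \<psi>0 l \<iota> k x\<bar>)"
  have M0: "0 \<le> M" using M[of undefined 0] by linarith
  have fin: "finite (Ls \<times> ((UNIV::('n\<Rightarrow>bool) set) \<times> Ks))"
    using F unfolding Ls_def Ks_def by (intro finite_cartesian_product finite_imageI) auto
  have "F \<subseteq> Ls \<times> (UNIV \<times> Ks)" unfolding Ls_def Ks_def by force
  then have "sum h F \<le> sum h (Ls \<times> (UNIV \<times> Ks))"
    by (rule sum_mono2[OF fin]) (simp add: h_def split_def)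
  also have "\<dots> = (\<Sum>l\<in>Ls. \<Sum>\<iota>\<in>UNIV. \<Sum>k\<in>Ks. h (l, \<iota>, k))"
    by (simp add: sum.cartesian_product split_def)
  also have "\<dots> \<le> (\<Sum>l\<in>Ls. \<Sum>\<iota>\<in>(UNIV::('n\<Rightarrow>bool) set). N * ((1/2) ^ l * M))"
  proof (intro sum_mono)
    fix l \<iota>
    have "(\<Sum>k\<in>Ks. 2 powr (- (real l * (real CARD('n) / 2 + 1))) * \<bar>dyadic_atom (psi_type \<phi>0 \<psi>0 \<iota>) l k x\<bar>)
       \<le> N * (2 powr (- (real l * (real CARD('n) / 2 + 1))) * (2 powr (real l * real CARD('n) / 2) * M))"
      unfolding N_def using F
      by (intro sum_dyadic_atoms_at_point_le[OF cont_supp_psi_type M]) (auto simp: Ks_def)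
    moreover have "2 powr (- (real l * (real CARD('n) / 2 + 1))) * 2 powr (real l * real CARD('n) / 2) = (1/2::real) ^ l"
      by (simp only: powr_level_weight) (simp add: powr_minus_divide power_one_over)
    ultimately show "(\<Sum>k\<in>Ks. h (l, \<iota>, k)) \<le> N * ((1/2) ^ l * M)"
      by (simp add: h_def psi_lk_eq_dyadic_atom mult.assoc[symmetric])
  qed
  also have "\<dots> = real CARD('n \<Rightarrow> bool) * N * M * (\<Sum>l\<in>Ls. (1/2) ^ l)"
    by (simp add: sum_distrib_left sum_distrib_right algebra_simps)
  also have "\<dots> \<le> real CARD('n \<Rightarrow> bool) * N * M * 2"
    using M0 sum_geometric_half_le[of Ls] F unfolding Ls_def N_def by (intro mult_left_mono) auto
  finally show ?thesis unfolding h_def N_def by simp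
qed

definition overlap_const :: "'n::finite itself \<Rightarrow> real" where
  "overlap_const _ = real (lattice_count_bound TYPE('n) (real CARD('n) * B)) * m ^ CARD('n)
     * (1 + real CARD('n) * B + 2 * real CARD('n \<Rightarrow> bool))"

lemma overlap_const_nonneg: "0 \<le> overlap_const TYPE('n::finite)"
  using B_nonneg m_nonneg by (simp add: overlap_const_def)

text \<open>Only boundedly many atoms of each level meet \<open>x\<close>, each of size \<open>O(2^(ld/2))\<close>: with the
  detail weights the levels sum geometrically, and on the scaling atoms meeting \<open>x\<close> the weight
  \<open>1 + s\<parallel>k\<parallel>\<close> is \<open>O(1 + s\<parallel>x\<parallel>)\<close>.\<close>
lemma sum_coef_weight_at_point_le:
  fixes x :: "real^'n::finite"
  assumes s: "0 \<le> s" "s \<le> 1" and F: "finite F"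
  shows "(\<Sum>a\<in>F. coef_weight s a * \<bar>wsys \<phi>0 \<psi>0 a x\<bar>) \<le> overlap_const TYPE('n) * (1 + s * norm x)"
proof -
  define N where "N = real (lattice_count_bound TYPE('n) (real CARD('n) * B))"
  define M where "M = m ^ CARD('n)"
  define B' where "B' = real CARD('n) * B"
  define D where "D = 2 * real CARD('n \<Rightarrow> bool) * N * M"
  have B': "0 \<le> B'" using B_nonneg by (simp add: B'_def)
  have NM: "0 \<le> N * M" using m_nonneg by (simp add: N_def M_def)
  have D: "0 \<le> D" using m_nonneg by (simp add: D_def N_def M_def)
  have fin: "finite (Inl -` F)" "finite (Inr -` F)" using F by (auto intro: finite_vimageI inj_onI)
  have "(\<Sum>a\<in>F. coef_weight s a * \<bar>wsys \<phi>0 \<psi>0 a x\<bar>)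
      = (\<Sum>k\<in>Inl -` F. (1 + s * norm (int_vec k)) * \<bar>phi_k \<phi>0 k x\<bar>)
        + (\<Sum>(l, \<iota>, k)\<in>Inr -` F. 2 powr (- (real l * (real CARD('n) / 2 + 1))) * \<bar>psi_lk \<phi>0 \<psi>0 l \<iota> k x\<bar>)"
    by (simp add: sum_over_sum_type[OF F] coef_weight_def wsys_def split_def)
  also have "\<dots> \<le> N * M * (1 + s * (norm x + B')) + D"
    unfolding N_def M_def B'_def D_def
    using sum_scaling_at_point_le[OF fin(1) s(1) abs_phi_tensor_le] sum_detail_at_point_le[OF fin(2) abs_psi_type_le]
    by (rule add_mono)
  also have "\<dots> \<le> (N * M * (1 + B') + D) * (1 + s * norm x)"
  proof -
    have "s * B' \<le> B'" using s B' by (simp add: mult_left_le_one_le)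
    moreover have "0 \<le> B' * (s * norm x)" using s B' by simp
    ultimately have "1 + s * (norm x + B') \<le> (1 + B') * (1 + s * norm x)" by (simp add: algebra_simps)
    then have "N * M * (1 + s * (norm x + B')) \<le> N * M * ((1 + B') * (1 + s * norm x))"
      using NM by (rule mult_left_mono)
    moreover have "D \<le> D * (1 + s * norm x)" using D s by (simp add: mult_le_cancel_left1)
    ultimately show ?thesis by (simp add: algebra_simps)
  qed
  also have "N * M * (1 + B') + D = overlap_const TYPE('n)"
    by (simp add: overlap_const_def N_def M_def B'_def D_def algebra_simps)
  finally show ?thesis .
qed

lemma sum_coef_weight_coef_le:
  fixes v :: "real^'n::finite \<Rightarrow> real"
  assumes s: "0 \<le> s" "s \<le> 1" and F: "finite F" and v: "v \<in> borel_measurable lborel"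
    and v_int: "integrable lborel (\<lambda>x. (1 + s * norm x) * \<bar>v x\<bar>)"
  shows "(\<Sum>a\<in>F. coef_weight s a * \<bar>wip v (wsys \<phi>0 \<psi>0 a)\<bar>)
           \<le> overlap_const TYPE('n) * (\<integral>x. (1 + s * norm x) * \<bar>v x\<bar> \<partial>lborel)"
proof -
  let ?b = "\<lambda>a. wsys \<phi>0 \<psi>0 a :: real^'n \<Rightarrow> real"
  let ?K = "overlap_const TYPE('n)"
  have "integrable lborel v" by (rule integrable_if_weighted_integrable[OF v v_int s(1)])
  have vb: "integrable lborel (\<lambda>x. v x * ?b a x)" for a
  proof -
    obtain R where "cont_supp_cball (?b a) R" by (rule cont_supp_wsys)
    then show ?thesis using \<open>integrable lborel v\<close> by (rule integrable_mult_cont_supp_cball)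
  qed
  have "\<bar>wip v (?b a)\<bar> \<le> (\<integral>x. \<bar>v x * ?b a x\<bar> \<partial>lborel)" for a
    unfolding wip_def by (rule integral_abs_bound_integral) (use vb in auto)
  then have "(\<Sum>a\<in>F. coef_weight s a * \<bar>wip v (?b a)\<bar>) \<le> (\<Sum>a\<in>F. coef_weight s a * (\<integral>x. \<bar>v x * ?b a x\<bar> \<partial>lborel))"
    using coef_weight_nonneg[OF s(1)] by (intro sum_mono mult_left_mono)
  also have "\<dots> = (\<integral>x. (\<Sum>a\<in>F. coef_weight s a * \<bar>v x * ?b a x\<bar>) \<partial>lborel)"
    using vb by (simp add: integral_sum)
  also have "\<dots> \<le> (\<integral>x. ?K * ((1 + s * norm x) * \<bar>v x\<bar>) \<partial>lborel)"
  proof (rule integral_mono')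
    show "integrable lborel (\<lambda>x. ?K * ((1 + s * norm x) * \<bar>v x\<bar>))" using v_int by simp
    fix x
    have "(\<Sum>a\<in>F. coef_weight s a * \<bar>v x * ?b a x\<bar>) = \<bar>v x\<bar> * (\<Sum>a\<in>F. coef_weight s a * \<bar>?b a x\<bar>)"
      by (simp add: sum_distrib_left abs_mult algebra_simps)
    also have "\<dots> \<le> \<bar>v x\<bar> * (?K * (1 + s * norm x))"
      using sum_coef_weight_at_point_le[OF s F] by (rule mult_left_mono) simp
    finally show "(\<Sum>a\<in>F. coef_weight s a * \<bar>v x * ?b a x\<bar>) \<le> ?K * ((1 + s * norm x) * \<bar>v x\<bar>)"
      by (simp add: algebra_simps)
    show "0 \<le> ?K * ((1 + s * norm x) * \<bar>v x\<bar>)" using overlap_const_nonneg[where 'n='n] s by simp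
  qed
  also have "\<dots> = ?K * (\<integral>x. (1 + s * norm x) * \<bar>v x\<bar> \<partial>lborel)" by simp
  finally show ?thesis .
qed

text \<open>Bessel's inequality for the indicator of a fixed cube \<open>Q\<close>: the \<open>2\<^sup>l\<^sup>d\<close> detail wavelets of
  level \<open>l\<close> located in the unit cube are supported in \<open>Q\<close>, so each of them pairs with the
  indicator to \<open>2\<^sup>-\<^sup>l\<^sup>d\<^sup>/\<^sup>2\<close> times the mean of \<open>\<psi>\<^sup>\<iota>\<close>. Every level therefore contributes the
  square of that mean to a sum bounded by the volume of \<open>Q\<close>.\<close>
lemma integral_psi_type_eq_0:
  assumes onb: "is_ONB (wsys \<phi>0 \<psi>0 :: _ \<Rightarrow> real^'n::finite \<Rightarrow> real) wsys_index" and \<iota>: "\<iota> \<in> wtypes"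
  shows "(\<integral>x. psi_type \<phi>0 \<psi>0 \<iota> (x::real^'n) \<partial>lborel) = 0"
proof -
  define Q :: "(real^'n) set" where "Q = cbox (\<chi> i. - (real CARD('n) * B)) (\<chi> i. 1 + real CARD('n) * B)"
  define J where "J = (\<integral>x. psi_type \<phi>0 \<psi>0 \<iota> (x::real^'n) \<partial>lborel)"
  have Q_fin: "emeasure lborel Q < \<infinity>"
    unfolding Q_def using emeasure_lborel_cbox_finite by (simp add: infinity_ennreal_def)
  have Q_sq: "(\<lambda>x. (indicator Q x :: real)\<^sup>2) = indicator Q" by (auto simp: indicator_def fun_eq_iff)
  then have u: "square_integrable (indicator Q :: real^'n \<Rightarrow> real)"
    unfolding square_integrable_def using Q_fin by (auto simp: Q_def intro: integrable_real_indicator)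
  have bound: "real L * J\<^sup>2 \<le> measure lborel Q" for L
  proof -
    define F :: "'n wavelet_index set" where "F = (\<lambda>(l, k). Inr (l, \<iota>, k)) ` Sigma {..<L} dyadic_grid"
    have inj: "inj_on (\<lambda>(l, k). Inr (l, \<iota>, k) :: 'n wavelet_index) (Sigma {..<L} dyadic_grid)"
      by (auto intro: inj_onI)
    have "real L * J\<^sup>2 = (\<Sum>l<L. \<Sum>k\<in>dyadic_grid l. (wip (indicator Q) (psi_lk \<phi>0 \<psi>0 l \<iota> k))\<^sup>2)"
      unfolding Q_def J_def psi_lk_eq_dyadic_atom
      by (simp add: sum_sq_wip_indicator_dyadic_grid[OF cont_supp_psi_type])
    also have "\<dots> = (\<Sum>a\<in>F. (wip (indicator Q) (wsys \<phi>0 \<psi>0 a))\<^sup>2)"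
      unfolding F_def using inj finite_dyadic_grid[where 'n='n] by (simp add: sum.reindex sum.Sigma split_def wsys_def)
    also have "\<dots> \<le> (\<integral>x. (indicator Q x)\<^sup>2 \<partial>lborel)"
      using ONB_bessel[OF onb u] finite_dyadic_grid[where 'n='n] \<iota> by (simp add: F_def wsys_index_def image_subset_iff)
    also have "\<dots> = measure lborel Q" using Q_sq Q_fin by (simp add: Q_def)
    finally show ?thesis .
  qed
  show ?thesis
  proof (rule ccontr)
    assume "(\<integral>x. psi_type \<phi>0 \<psi>0 \<iota> x \<partial>lborel) \<noteq> 0"
    then have "0 < J\<^sup>2" by (simp add: J_def)
    moreover obtain L :: nat where "measure lborel Q / J\<^sup>2 < real L" using reals_Archimedean2 by blast
    ultimately show False using bound[of L] by (simp add: field_simps)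
  qed
qed

lemma psi_lk_coef_lipschitz_le:
  assumes onb: "is_ONB (wsys \<phi>0 \<psi>0 :: _ \<Rightarrow> real^'n::finite \<Rightarrow> real) wsys_index" and \<iota>: "\<iota> \<in> wtypes"
    and v: "L-lipschitz_on UNIV v"
  shows "\<bar>wip v (psi_lk \<phi>0 \<psi>0 l \<iota> k)\<bar> \<le> L * (real CARD('n) * B) * 2 powr (- (real l * (real CARD('n) / 2 + 1)))
           * (\<integral>x. \<bar>psi_type \<phi>0 \<psi>0 \<iota> (x::real^'n)\<bar> \<partial>lborel)"
  unfolding wip_def psi_lk_eq_dyadic_atom
  by (rule dyadic_atom_lipschitz_pairing[OF cont_supp_psi_type integral_psi_type_eq_0[OF onb \<iota>] v])

lemma wsys_coef_lipschitz_le: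
  fixes v :: "real^'n::finite \<Rightarrow> real"
  assumes onb: "is_ONB (wsys \<phi>0 \<psi>0 :: _ \<Rightarrow> real^'n \<Rightarrow> real) wsys_index"
    and mean_zero: "(\<integral>x. phi_tensor \<phi>0 (x::real^'n) \<partial>lborel) = 0"
    and v: "L-lipschitz_on UNIV v" and a: "a \<in> wsys_index"
  shows "\<bar>wip v (wsys \<phi>0 \<psi>0 a)\<bar> \<le> L * (real CARD('n) * B * ((\<integral>x. \<bar>phi_tensor \<phi>0 (x::real^'n)\<bar> \<partial>lborel)
           + (\<Sum>\<iota>\<in>UNIV. \<integral>x. \<bar>psi_type \<phi>0 \<psi>0 \<iota> (x::real^'n)\<bar> \<partial>lborel))) * coef_weight 0 a"
proof -
  define A\<Phi> where "A\<Phi> = (\<integral>x. \<bar>phi_tensor \<phi>0 (x::real^'n)\<bar> \<partial>lborel)"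
  define A\<Psi> where "A\<Psi> = (\<Sum>\<iota>\<in>UNIV. \<integral>x. \<bar>psi_type \<phi>0 \<psi>0 \<iota> (x::real^'n)\<bar> \<partial>lborel)"
  have L: "0 \<le> L" by (rule lipschitz_on_nonneg[OF v])
  have A: "0 \<le> A\<Phi>" "0 \<le> A\<Psi>" by (auto simp: A\<Phi>_def A\<Psi>_def intro: sum_nonneg)
  have "\<bar>wip v (wsys \<phi>0 \<psi>0 a)\<bar> \<le> L * (real CARD('n) * B * (A\<Phi> + A\<Psi>)) * coef_weight 0 a"
  proof (cases a)
    case (Inl k)
    have "\<bar>wip v (wsys \<phi>0 \<psi>0 a)\<bar>
        \<le> L * (real CARD('n) * B) * 2 powr (- (real 0 * (real CARD('n) / 2 + 1))) * A\<Phi>"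
      unfolding Inl wsys_Inl wip_def A\<Phi>_def
      by (rule dyadic_atom_lipschitz_pairing[OF cont_supp_phi_tensor mean_zero v])
    also have "\<dots> = L * (real CARD('n) * B) * A\<Phi>" by simp
    also have "\<dots> \<le> L * (real CARD('n) * B) * (A\<Phi> + A\<Psi>)"
      using L A B_nonneg by (intro mult_left_mono) auto
    finally show ?thesis by (simp add: Inl coef_weight_def mult.assoc)
  next
    case (Inr p)
    then obtain l \<iota> k where a_eq: "a = Inr (l, \<iota>, k)" by (metis prod_cases3)
    then have \<iota>: "\<iota> \<in> wtypes" using a by (auto simp: wsys_index_def)
    have "(\<integral>x. \<bar>psi_type \<phi>0 \<psi>0 \<iota> (x::real^'n)\<bar> \<partial>lborel) \<le> A\<Phi> + A\<Psi>"
      unfolding A\<Psi>_def using A by (intro add_increasing member_le_sum) auto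
    moreover have "0 \<le> L * (real CARD('n) * B) * 2 powr (- (real l * (real CARD('n) / 2 + 1)))"
      using L B_nonneg by simp
    ultimately have "\<bar>wip v (psi_lk \<phi>0 \<psi>0 l \<iota> k)\<bar>
        \<le> L * (real CARD('n) * B) * 2 powr (- (real l * (real CARD('n) / 2 + 1))) * (A\<Phi> + A\<Psi>)"
      by (rule order_trans[OF psi_lk_coef_lipschitz_le[OF onb \<iota> v] mult_left_mono])
    then show ?thesis by (simp add: a_eq wsys_def coef_weight_def mult_ac)
  qed
  then show ?thesis by (simp add: A\<Phi>_def A\<Psi>_def)
qed

text \<open>If \<open>\<Phi>\<close> had mean zero, every basis function would have mean zero, so all coefficients of
  the \<open>1/R\<close>-Lipschitz cutoff \<open>v\<close> of radius \<open>R\<close> would be \<open>O(1/R)\<close> times the weights with \<open>s = 0\<close>.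
  Parseval would then give \<open>\<integral>v\<^sup>2 = O(1/R) \<integral>\<bar>v\<bar>\<close>, which fails for large \<open>R\<close> since both integrals
  are of order \<open>R\<^sup>d\<close>.\<close>
lemma integral_phi_tensor_neq_0:
  assumes onb: "is_ONB (wsys \<phi>0 \<psi>0 :: _ \<Rightarrow> real^'n::finite \<Rightarrow> real) wsys_index"
  shows "(\<integral>x. phi_tensor \<phi>0 (x::real^'n) \<partial>lborel) \<noteq> 0"
proof
  assume mean_zero: "(\<integral>x. phi_tensor \<phi>0 (x::real^'n) \<partial>lborel) = 0"
  define D where "D = real CARD('n) * B * ((\<integral>x. \<bar>phi_tensor \<phi>0 (x::real^'n)\<bar> \<partial>lborel)
                      + (\<Sum>\<iota>\<in>UNIV. \<integral>x. \<bar>psi_type \<phi>0 \<psi>0 \<iota> (x::real^'n)\<bar> \<partial>lborel))"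
  define K where "K = overlap_const TYPE('n)"
  define R where "R = 2 ^ CARD('n) * D * K + 1"
  define \<omega> where "\<omega> = unit_ball_vol (real CARD('n))"
  have D: "0 \<le> D" using B_nonneg by (simp add: D_def sum_nonneg)
  have K: "0 \<le> K" unfolding K_def by (rule overlap_const_nonneg)
  have R: "0 < R" using D K by (simp add: R_def add_nonneg_pos)
  define v where "v = (radial_cutoff R :: real^'n \<Rightarrow> real)"
  have v_lip: "(1 / R)-lipschitz_on UNIV v" unfolding v_def by (rule lipschitz_radial_cutoff[OF R])
  have v_supp: "cont_supp_cball v (2 * R)" unfolding v_def by (rule cont_supp_radial_cutoff[OF R])
  have v_nonneg: "0 \<le> v x" for x unfolding v_def by (rule radial_cutoff_bounds)
  have v_sq: "square_integrable v"
    unfolding square_integrable_def power2_eq_square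
    using integrable_continuous_mult_cont_supp_cball[OF v_supp lipschitz_on_continuous_on[OF v_lip]]
      cont_supp_cball_measurable[OF v_supp] by simp
  have "\<omega> * R ^ CARD('n) \<le> (\<integral>x. v x * v x \<partial>lborel)"
    using measure_cball_le_integral_radial_cutoff_sq[OF R, where 'a="real^'n"] R
    by (simp add: v_def \<omega>_def content_cball)
  also have "\<dots> \<le> 1 / R * D * (K * (\<integral>x. (1 + 0 * norm x) * \<bar>v x\<bar> \<partial>lborel))"
  proof (rule ONB_integral_sq_le[OF onb v_sq])
    show "0 \<le> 1 / R * D" using R D by simp
    show "\<bar>wip v (wsys \<phi>0 \<psi>0 a)\<bar> \<le> 1 / R * D * coef_weight 0 a" if "a \<in> wsys_index" for a
      unfolding D_def by (rule wsys_coef_lipschitz_le[OF onb mean_zero v_lip that])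
    show "(\<Sum>a\<in>F. coef_weight 0 a * \<bar>wip v (wsys \<phi>0 \<psi>0 a)\<bar>) \<le> K * (\<integral>x. (1 + 0 * norm x) * \<bar>v x\<bar> \<partial>lborel)"
      if "finite F" for F :: "'n wavelet_index set"
      unfolding K_def using that v_nonneg integrable_cont_supp_cball[OF v_supp] cont_supp_cball_measurable[OF v_supp]
      by (intro sum_coef_weight_coef_le) auto
  qed
  also have "(\<integral>x. (1 + 0 * norm x) * \<bar>v x\<bar> \<partial>lborel) \<le> \<omega> * (2 * R) ^ CARD('n)"
    using integral_radial_cutoff_le[OF R, where 'a="real^'n"] R v_nonneg
    by (simp add: v_def \<omega>_def content_cball)
  then have "1 / R * D * (K * (\<integral>x. (1 + 0 * norm x) * \<bar>v x\<bar> \<partial>lborel)) \<le> 1 / R * D * (K * (\<omega> * (2 * R) ^ CARD('n)))"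
    using D K R by (intro mult_left_mono) auto
  also have "\<dots> = \<omega> * R ^ CARD('n) * (2 ^ CARD('n) * D * K / R)"
    by (simp add: power_mult_distrib mult_ac)
  finally have "\<omega> * R ^ CARD('n) * 1 \<le> \<omega> * R ^ CARD('n) * (2 ^ CARD('n) * D * K / R)" by simp
  moreover have "0 < \<omega> * R ^ CARD('n)" using R by (simp add: \<omega>_def)
  ultimately have "1 \<le> 2 ^ CARD('n) * D * K / R" by (rule mult_left_le_imp_le)
  then have "R \<le> 2 ^ CARD('n) * D * K" using R by (simp add: le_divide_eq_1_pos)
  then show False by (simp add: R_def)
qed

lemma phi_k_coef_le:
  assumes v: "continuous_on UNIV v" "\<And>x. \<bar>v x\<bar> \<le> norm x + c"
  shows "\<bar>wip v (phi_k \<phi>0 (k :: 'n::finite \<Rightarrow> int))\<bar>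
           \<le> (norm (int_vec k) + real CARD('n) * B + c) * (\<integral>x. \<bar>phi_tensor \<phi>0 (x::real^'n)\<bar> \<partial>lborel)"
proof -
  have atom: "cont_supp_cball (dyadic_atom (phi_tensor \<phi>0) 0 k) ((real CARD('n) * B + norm (int_vec k)) / 2 ^ 0)"
    by (rule cont_supp_cball_dyadic_atom[OF cont_supp_phi_tensor])
  have "\<bar>wip v (phi_k \<phi>0 k)\<bar>
      \<le> (\<integral>x. (norm (int_vec k) + real CARD('n) * B + c) * dyadic_atom (\<lambda>y. \<bar>phi_tensor \<phi>0 y\<bar>) 0 k x \<partial>lborel)"
    unfolding wip_def phi_k_eq_dyadic_atom
  proof (rule integral_abs_bound_integral)
    show "integrable lborel (\<lambda>x. v x * dyadic_atom (phi_tensor \<phi>0) 0 k x)"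
      by (rule integrable_continuous_mult_cont_supp_cball[OF atom v(1)])
    show "integrable lborel (\<lambda>x. (norm (int_vec k) + real CARD('n) * B + c) * dyadic_atom (\<lambda>y. \<bar>phi_tensor \<phi>0 y\<bar>) 0 k x)"
      by (intro integrable_mult_right
          integrable_cont_supp_cball[OF cont_supp_cball_dyadic_atom[OF cont_supp_cball_abs[OF cont_supp_phi_tensor]]])
    fix x :: "real^'n"
    show "\<bar>v x * dyadic_atom (phi_tensor \<phi>0) 0 k x\<bar>
        \<le> (norm (int_vec k) + real CARD('n) * B + c) * dyadic_atom (\<lambda>y. \<bar>phi_tensor \<phi>0 y\<bar>) 0 k x"
    proof (cases "dyadic_atom (phi_tensor \<phi>0) 0 k x = 0")
      case False
      then have "norm (x - int_vec k) \<le> real CARD('n) * B"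
        using dyadic_atom_nonzeroD[OF cont_supp_phi_tensor] by fastforce
      moreover have "norm x \<le> norm (x - int_vec k) + norm (int_vec k)"
        by (metis diff_add_cancel norm_triangle_ineq)
      ultimately have "\<bar>v x\<bar> \<le> norm (int_vec k) + real CARD('n) * B + c" using v(2)[of x] by linarith
      then have "\<bar>v x\<bar> * \<bar>dyadic_atom (phi_tensor \<phi>0) 0 k x\<bar>
          \<le> (norm (int_vec k) + real CARD('n) * B + c) * \<bar>dyadic_atom (phi_tensor \<phi>0) 0 k x\<bar>"
        by (rule mult_right_mono) simp
      then show ?thesis by (simp add: abs_mult abs_dyadic_atom)
    qed (simp add: abs_dyadic_atom[symmetric])
  qed
  also have "\<dots> = (norm (int_vec k) + real CARD('n) * B + c) * (\<integral>x. \<bar>phi_tensor \<phi>0 (x::real^'n)\<bar> \<partial>lborel)"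
    by (simp add: integral_dyadic_atom)
  finally show ?thesis .
qed

lemma phi_0_coef_mult_radial_cutoff:
  assumes R: "0 < R" "real CARD('n) * B \<le> R"
  shows "wip (\<lambda>x. h x * radial_cutoff R x) (phi_k \<phi>0 (\<lambda>_. 0))
           = (\<integral>x. h x * phi_tensor \<phi>0 (x::real^'n::finite) \<partial>lborel)"
  unfolding wip_def
proof (intro Bochner_Integration.integral_cong refl)
  fix x :: "real^'n"
  have "norm x \<le> R" if "phi_tensor \<phi>0 x \<noteq> 0"
    using that cont_supp_phi_tensor R unfolding cont_supp_cball_def by (meson not_le order_trans)
  then show "h x * radial_cutoff R x * phi_k \<phi>0 (\<lambda>_. 0) x = h x * phi_tensor \<phi>0 x"
    using radial_cutoff_eq_1[OF R(1), of x] by (auto simp: phi_k_def phi_tensor_def)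
qed

definition shift_const :: "'n::finite itself \<Rightarrow> real" where
  "shift_const _ = real CARD('n) * B * (\<integral>x. \<bar>phi_tensor \<phi>0 (x::real^'n)\<bar> \<partial>lborel)
     / \<bar>\<integral>x. phi_tensor \<phi>0 (x::real^'n) \<partial>lborel\<bar>"

lemma shift_const_nonneg: "0 \<le> shift_const TYPE('n::finite)"
  using B_nonneg by (simp add: shift_const_def)

text \<open>A \<open>1\<close>-Lipschitz test function may be shifted by a constant (which does not change its
  pairing with a function of mean zero) so as to be orthogonal to \<open>\<Phi>\<close>, whose coefficient carries
  weight \<open>0\<close> on the right-hand side; this is where \<open>\<integral>\<Phi> \<noteq> 0\<close> is needed.\<close>
lemma lipschitz_shift_orthogonal_phi:
  fixes h :: "real^'n::finite \<Rightarrow> real"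
  assumes onb: "is_ONB (wsys \<phi>0 \<psi>0 :: _ \<Rightarrow> real^'n \<Rightarrow> real) wsys_index" and h: "1-lipschitz_on UNIV h"
  obtains c where "\<And>x. \<bar>h x + c\<bar> \<le> norm x + shift_const TYPE('n)"
    and "(\<integral>x. (h x + c) * phi_tensor \<phi>0 x \<partial>lborel) = 0"
proof -
  define P where "P = (\<integral>x. phi_tensor \<phi>0 (x::real^'n) \<partial>lborel)"
  define A where "A = (\<integral>x. \<bar>phi_tensor \<phi>0 (x::real^'n)\<bar> \<partial>lborel)"
  have P: "P \<noteq> 0" unfolding P_def by (rule integral_phi_tensor_neq_0[OF onb])
  have h0: "\<bar>h x - h 0\<bar> \<le> norm x" for x
    using lipschitz_onD[OF h, of x 0] by (simp add: dist_real_def)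
  have h_cont: "continuous_on UNIV (\<lambda>x. h x - h 0)"
    using lipschitz_on_continuous_on[OF h] by (intro continuous_intros)
  define I where "I = (\<integral>x. (h x - h 0) * phi_tensor \<phi>0 x \<partial>lborel)"
  have I_int: "integrable lborel (\<lambda>x. (h x - h 0) * phi_tensor \<phi>0 x)"
    by (rule integrable_continuous_mult_cont_supp_cball[OF cont_supp_phi_tensor h_cont])
  have "\<bar>I\<bar> \<le> real CARD('n) * B * A"
    using phi_k_coef_le[OF h_cont, of 0 "\<lambda>_. 0"] h0
    by (simp add: I_def wip_def phi_k_eq_dyadic_atom A_def int_vec_def dyadic_atom_def vec_eq_iff
        flip: zero_vec_def)
  show thesis
  proof (rule that)
    fix x
    have "\<bar>h x + (- h 0 - I / P)\<bar> \<le> \<bar>h x - h 0\<bar> + \<bar>I\<bar> / \<bar>P\<bar>"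
      using abs_triangle_ineq4[of "h x - h 0" "I / P"] by (simp add: abs_divide algebra_simps)
    also have "\<dots> \<le> norm x + real CARD('n) * B * A / \<bar>P\<bar>"
      using h0[of x] \<open>\<bar>I\<bar> \<le> _\<close> by (intro add_mono divide_right_mono) auto
    finally show "\<bar>h x + (- h 0 - I / P)\<bar> \<le> norm x + shift_const TYPE('n)"
      by (simp add: shift_const_def A_def P_def)
  next
    have "(\<integral>x. (h x + (- h 0 - I / P)) * phi_tensor \<phi>0 x \<partial>lborel)
        = (\<integral>x. (h x - h 0) * phi_tensor \<phi>0 x - I / P * phi_tensor \<phi>0 x \<partial>lborel)"
      by (simp add: algebra_simps)
    also have "\<dots> = (\<integral>x. (h x - h 0) * phi_tensor \<phi>0 x \<partial>lborel) - (\<integral>x. I / P * phi_tensor \<phi>0 (x::real^'n) \<partial>lborel)"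
      using integrable_mult_right[OF integrable_cont_supp_cball[OF cont_supp_phi_tensor], of "I / P"]
      by (rule Bochner_Integration.integral_diff[OF I_int])
    also have "\<dots> = I - I / P * P" by (simp only: I_def P_def integral_mult_right_zero)
    also have "\<dots> = 0" using P by simp
    finally show "(\<integral>x. (h x + (- h 0 - I / P)) * phi_tensor \<phi>0 x \<partial>lborel) = 0" .
  qed
qed

definition cutoff_const :: "'n::finite itself \<Rightarrow> real \<Rightarrow> real" where
  "cutoff_const _ c0 = (1 + real CARD('n) * B + c0) * (\<integral>x. \<bar>phi_tensor \<phi>0 (x::real^'n)\<bar> \<partial>lborel)
     + 4 * (real CARD('n) * B) * (\<Sum>\<iota>\<in>UNIV. \<integral>x. \<bar>psi_type \<phi>0 \<psi>0 \<iota> (x::real^'n)\<bar> \<partial>lborel)"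

lemma cutoff_const_nonneg: "0 \<le> c0 \<Longrightarrow> 0 \<le> cutoff_const TYPE('n::finite) c0"
  using B_nonneg by (simp add: cutoff_const_def sum_nonneg)

lemma phi_k_coef_mult_radial_cutoff_le:
  fixes h :: "real^'n::finite \<Rightarrow> real"
  assumes h: "continuous_on UNIV h" "\<And>x. \<bar>h x\<bar> \<le> norm x + c0"
    and h_phi: "(\<integral>x. h x * phi_tensor \<phi>0 x \<partial>lborel) = 0"
    and R: "0 < R" "real CARD('n) * B \<le> R"
  shows "\<bar>wip (\<lambda>x. h x * radial_cutoff R x) (phi_k \<phi>0 k)\<bar>
           \<le> (1 + real CARD('n) * B + c0) * (\<integral>x. \<bar>phi_tensor \<phi>0 (x::real^'n)\<bar> \<partial>lborel) * norm (int_vec k)"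
proof (cases "k = (\<lambda>_. 0)")
  case True
  then show ?thesis using phi_0_coef_mult_radial_cutoff[OF R, of h] h_phi by (simp add: int_vec_zero)
next
  case False
  define A where "A = (\<integral>x. \<bar>phi_tensor \<phi>0 (x::real^'n)\<bar> \<partial>lborel)"
  have c0: "0 \<le> c0" using h(2)[of 0] by simp
  have k: "1 \<le> norm (int_vec k)" using False by (rule one_le_norm_int_vec)
  have v_le: "\<bar>h x * radial_cutoff R x\<bar> \<le> norm x + c0" for x
  proof -
    have "\<bar>h x * radial_cutoff R x\<bar> \<le> \<bar>h x\<bar>" using radial_cutoff_bounds[of R x] by (simp add: abs_mult mult_left_le)
    then show ?thesis using h(2)[of x] by linarith
  qed
  have "continuous_on UNIV (\<lambda>x. h x * radial_cutoff R x)"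
    by (intro continuous_on_mult h(1) lipschitz_on_continuous_on[OF lipschitz_radial_cutoff[OF R(1)]])
  then have "\<bar>wip (\<lambda>x. h x * radial_cutoff R x) (phi_k \<phi>0 k)\<bar> \<le> (norm (int_vec k) + real CARD('n) * B + c0) * A"
    unfolding A_def using v_le by (rule phi_k_coef_le)
  also have "\<dots> \<le> (1 + real CARD('n) * B + c0) * A * norm (int_vec k)"
  proof -
    have "real CARD('n) * B + c0 \<le> (real CARD('n) * B + c0) * norm (int_vec k)"
      using mult_left_mono[OF k, of "real CARD('n) * B + c0"] B_nonneg c0 by simp
    then have "norm (int_vec k) + real CARD('n) * B + c0 \<le> (1 + real CARD('n) * B + c0) * norm (int_vec k)"
      by (simp add: algebra_simps)
    then have "(norm (int_vec k) + real CARD('n) * B + c0) * A \<le> (1 + real CARD('n) * B + c0) * norm (int_vec k) * A"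
      by (rule mult_right_mono) (simp add: A_def)
    then show ?thesis by (simp add: mult_ac)
  qed
  finally show ?thesis by (simp add: A_def)
qed

lemma cutoff_coef_le:
  fixes h :: "real^'n::finite \<Rightarrow> real"
  assumes onb: "is_ONB (wsys \<phi>0 \<psi>0 :: _ \<Rightarrow> real^'n \<Rightarrow> real) wsys_index"
    and h: "1-lipschitz_on UNIV h" "\<And>x. \<bar>h x\<bar> \<le> norm x + c0"
    and h_phi: "(\<integral>x. h x * phi_tensor \<phi>0 x \<partial>lborel) = 0"
    and R: "0 < R" "c0 \<le> R" "real CARD('n) * B \<le> R" and a: "a \<in> wsys_index"
  shows "\<bar>wip (\<lambda>x. h x * radial_cutoff R x) (wsys \<phi>0 \<psi>0 a)\<bar> \<le> cutoff_const TYPE('n) c0 * rhs_weight a"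
proof (cases a)
  case (Inl k)
  have "(1 + real CARD('n) * B + c0) * (\<integral>x. \<bar>phi_tensor \<phi>0 (x::real^'n)\<bar> \<partial>lborel) \<le> cutoff_const TYPE('n) c0"
    using B_nonneg by (simp add: cutoff_const_def sum_nonneg)
  then have "(1 + real CARD('n) * B + c0) * (\<integral>x. \<bar>phi_tensor \<phi>0 (x::real^'n)\<bar> \<partial>lborel) * norm (int_vec k)
      \<le> cutoff_const TYPE('n) c0 * norm (int_vec k)"
    by (rule mult_right_mono) simp
  then show ?thesis
    using phi_k_coef_mult_radial_cutoff_le[OF lipschitz_on_continuous_on[OF h(1)] h(2) h_phi R(1,3), of k]
    by (simp add: Inl wsys_def rhs_weight_def)
next
  case (Inr p)
  then obtain l \<iota> k where a_eq: "a = Inr (l, \<iota>, k)" by (metis prod_cases3)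
  then have \<iota>: "\<iota> \<in> wtypes" using a by (auto simp: wsys_index_def)
  have c0: "0 \<le> c0" using h(2)[of 0] by simp
  define w where "w = 2 powr (- (real l * (real CARD('n) / 2 + 1)))"
  have "(\<integral>x. \<bar>psi_type \<phi>0 \<psi>0 \<iota> (x::real^'n)\<bar> \<partial>lborel)
      \<le> (\<Sum>\<iota>\<in>UNIV. \<integral>x. \<bar>psi_type \<phi>0 \<psi>0 \<iota> (x::real^'n)\<bar> \<partial>lborel)"
    by (rule member_le_sum) auto
  moreover have "0 \<le> 4 * (real CARD('n) * B) * w" using B_nonneg by (simp add: w_def)
  ultimately have "\<bar>wip (\<lambda>x. h x * radial_cutoff R x) (psi_lk \<phi>0 \<psi>0 l \<iota> k)\<bar>
      \<le> 4 * (real CARD('n) * B) * w * (\<Sum>\<iota>\<in>UNIV. \<integral>x. \<bar>psi_type \<phi>0 \<psi>0 \<iota> (x::real^'n)\<bar> \<partial>lborel)"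
    unfolding w_def
    by (rule order_trans[OF psi_lk_coef_lipschitz_le[OF onb \<iota> lipschitz_mult_radial_cutoff[OF h R(1,2)]]
          mult_left_mono])
  also have "\<dots> \<le> cutoff_const TYPE('n) c0 * w"
    using B_nonneg c0 by (simp add: cutoff_const_def w_def algebra_simps)
  finally show ?thesis by (simp add: a_eq wsys_def rhs_weight_def w_def)
qed

lemma wsys_coef_truncate:
  fixes u :: "real^'n::finite \<Rightarrow> real"
  assumes u: "u \<in> borel_measurable lborel" "integrable lborel (\<lambda>x. (1 + norm x) * \<bar>u x\<bar>)"
  shows "wip (truncate n u) (wsys \<phi>0 \<psi>0 a)
           = wip u (wsys \<phi>0 \<psi>0 a) - wip (\<lambda>x. u x - truncate n u x) (wsys \<phi>0 \<psi>0 a)"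
proof -
  obtain R where b: "cont_supp_cball (wsys \<phi>0 \<psi>0 a :: real^'n \<Rightarrow> real) R" by (rule cont_supp_wsys)
  have u_int: "integrable lborel u" using integrable_if_weighted_integrable[of u 1] u by simp
  have "(\<lambda>x. u x - truncate n u x) \<in> borel_measurable lborel" using u(1) by measurable
  then have r: "integrable lborel (\<lambda>x. u x - truncate n u x)"
    by (rule integrable_if_weighted_integrable[OF _ _ zero_le_one])
      (use integrable_weighted_truncation_error[OF u] in simp)
  have "wip (truncate n u) (wsys \<phi>0 \<psi>0 a)
      = (\<integral>x. u x * wsys \<phi>0 \<psi>0 a x - (u x - truncate n u x) * wsys \<phi>0 \<psi>0 a x \<partial>lborel)"
    unfolding wip_def by (intro Bochner_Integration.integral_cong) (auto simp: algebra_simps)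
  also have "\<dots> = wip u (wsys \<phi>0 \<psi>0 a) - wip (\<lambda>x. u x - truncate n u x) (wsys \<phi>0 \<psi>0 a)"
    unfolding wip_def
    using integrable_mult_cont_supp_cball[OF b u_int] integrable_mult_cont_supp_cball[OF b r]
    by (rule Bochner_Integration.integral_diff)
  finally show ?thesis .
qed

text \<open>Truncation makes \<open>u\<close> square integrable, so that Parseval applies; the error it introduces in
  the coefficients is controlled in the weighted \<open>L\<^sup>1\<close> norm by the overlap bound.\<close>
lemma integral_mult_truncate_le:
  fixes v u :: "real^'n::finite \<Rightarrow> real"
  assumes onb: "is_ONB (wsys \<phi>0 \<psi>0 :: _ \<Rightarrow> real^'n \<Rightarrow> real) wsys_index"
    and v: "square_integrable v" and C: "0 \<le> C"
    and v_coef: "\<And>a. a \<in> wsys_index \<Longrightarrow> \<bar>wip v (wsys \<phi>0 \<psi>0 a)\<bar> \<le> C * rhs_weight a"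
    and u: "u \<in> borel_measurable lborel" "integrable lborel (\<lambda>x. (1 + norm x) * \<bar>u x\<bar>)"
    and S: "\<And>F. finite F \<Longrightarrow> F \<subseteq> wsys_index \<Longrightarrow> (\<Sum>a\<in>F. rhs_weight a * \<bar>wip u (wsys \<phi>0 \<psi>0 a)\<bar>) \<le> S"
  shows "(\<integral>x. v x * truncate n u x \<partial>lborel)
           \<le> C * (S + overlap_const TYPE('n) * (\<integral>x. (1 + norm x) * \<bar>u x - truncate n u x\<bar> \<partial>lborel))"
proof (rule ONB_integral_mult_le[OF onb v square_integrable_truncate])
  show "integrable lborel u" using integrable_if_weighted_integrable[of u 1] u by simp
  define r where "r x = u x - truncate n u x" for x
  have r: "r \<in> borel_measurable lborel" "integrable lborel (\<lambda>x. (1 + 1 * norm x) * \<bar>r x\<bar>)"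
    using integrable_weighted_truncation_error[OF u] u(1) by (simp_all add: r_def[abs_def])
  fix F :: "'n wavelet_index set" assume F: "finite F" "F \<subseteq> wsys_index"
  have "\<bar>wip v (wsys \<phi>0 \<psi>0 a)\<bar> * \<bar>wip (truncate n u) (wsys \<phi>0 \<psi>0 a)\<bar>
      \<le> C * (rhs_weight a * \<bar>wip u (wsys \<phi>0 \<psi>0 a)\<bar> + coef_weight 1 a * \<bar>wip r (wsys \<phi>0 \<psi>0 a)\<bar>)"
    if "a \<in> F" for a
  proof -
    have "\<bar>wip v (wsys \<phi>0 \<psi>0 a)\<bar> \<le> C * rhs_weight a" using that F v_coef by blast
    moreover have "\<bar>wip (truncate n u) (wsys \<phi>0 \<psi>0 a)\<bar> \<le> \<bar>wip u (wsys \<phi>0 \<psi>0 a)\<bar> + \<bar>wip r (wsys \<phi>0 \<psi>0 a)\<bar>"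
      unfolding wsys_coef_truncate[OF u] r_def by (rule abs_triangle_ineq4)
    ultimately have "\<bar>wip v (wsys \<phi>0 \<psi>0 a)\<bar> * \<bar>wip (truncate n u) (wsys \<phi>0 \<psi>0 a)\<bar>
        \<le> C * rhs_weight a * (\<bar>wip u (wsys \<phi>0 \<psi>0 a)\<bar> + \<bar>wip r (wsys \<phi>0 \<psi>0 a)\<bar>)"
      by (rule mult_mono) (use C rhs_weight_nonneg[of a] in auto)
    also have "\<dots> \<le> C * (rhs_weight a * \<bar>wip u (wsys \<phi>0 \<psi>0 a)\<bar> + coef_weight 1 a * \<bar>wip r (wsys \<phi>0 \<psi>0 a)\<bar>)"
      using C rhs_weight_le_coef_weight[of a]
      by (simp add: distrib_left mult.assoc mult_left_mono mult_right_mono)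
    finally show ?thesis .
  qed
  then have "(\<Sum>a\<in>F. \<bar>wip v (wsys \<phi>0 \<psi>0 a)\<bar> * \<bar>wip (truncate n u) (wsys \<phi>0 \<psi>0 a)\<bar>)
      \<le> C * ((\<Sum>a\<in>F. rhs_weight a * \<bar>wip u (wsys \<phi>0 \<psi>0 a)\<bar>) + (\<Sum>a\<in>F. coef_weight 1 a * \<bar>wip r (wsys \<phi>0 \<psi>0 a)\<bar>))"
    by (simp only: sum.distrib[symmetric] sum_distrib_left sum_mono)
  also have "\<dots> \<le> C * (S + overlap_const TYPE('n) * (\<integral>x. (1 + 1 * norm x) * \<bar>r x\<bar> \<partial>lborel))"
    using S[OF F] sum_coef_weight_coef_le[OF _ _ F(1) r] C by (intro mult_left_mono add_mono) auto
  finally show "(\<Sum>a\<in>F. \<bar>wip v (wsys \<phi>0 \<psi>0 a)\<bar> * \<bar>wip (truncate n u) (wsys \<phi>0 \<psi>0 a)\<bar>)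
      \<le> C * (S + overlap_const TYPE('n) * (\<integral>x. (1 + norm x) * \<bar>u x - truncate n u x\<bar> \<partial>lborel))"
    by (simp add: r_def)
qed (use u in simp)

text \<open>The pairing of a \<open>1\<close>-Lipschitz \<open>h\<close> with \<open>u\<close> is the limit of the pairings of the compactly
  supported cutoffs of the shifted \<open>h\<close> with the truncations of \<open>u\<close>, to which Parseval applies.\<close>
lemma lipschitz_pairing_le:
  fixes h u :: "real^'n::finite \<Rightarrow> real"
  assumes onb: "is_ONB (wsys \<phi>0 \<psi>0 :: _ \<Rightarrow> real^'n \<Rightarrow> real) wsys_index"
    and h: "1-lipschitz_on UNIV h"
    and u: "u \<in> borel_measurable lborel" "integrable lborel (\<lambda>x. (1 + norm x) * \<bar>u x\<bar>)"
    and u_mean: "(\<integral>x. u x \<partial>lborel) = 0"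
    and S: "\<And>F. finite F \<Longrightarrow> F \<subseteq> wsys_index \<Longrightarrow> (\<Sum>a\<in>F. rhs_weight a * \<bar>wip u (wsys \<phi>0 \<psi>0 a)\<bar>) \<le> S"
  shows "(\<integral>x. h x * u x \<partial>lborel) \<le> cutoff_const TYPE('n) (shift_const TYPE('n)) * S"
proof -
  define c0 where "c0 = shift_const TYPE('n)"
  define C where "C = cutoff_const TYPE('n) c0"
  define E where "E n = (\<integral>x. (1 + norm x) * \<bar>u x - truncate n u x\<bar> \<partial>lborel)" for n
  obtain c where hc: "\<And>x. \<bar>h x + c\<bar> \<le> norm x + c0" "(\<integral>x. (h x + c) * phi_tensor \<phi>0 x \<partial>lborel) = 0"
    unfolding c0_def by (fact lipschitz_shift_orthogonal_phi[OF onb h])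
  define h' where "h' x = h x + c" for x
  have h': "1-lipschitz_on UNIV h'"
    using lipschitz_onD[OF h] by (intro lipschitz_onI) (simp_all add: h'_def dist_real_def)
  have h'_cont: "continuous_on UNIV h'" by (rule lipschitz_on_continuous_on[OF h'])
  have c0: "0 \<le> c0" unfolding c0_def by (rule shift_const_nonneg)
  have "(\<integral>x. h x * u x \<partial>lborel) = (\<integral>x. h' x * u x \<partial>lborel)"
    unfolding h'_def using integrable_linear_growth_mult(2)[OF h'_cont _ u, of c0] hc(1)
      integrable_if_weighted_integrable[of u 1] u u_mean
    by (intro integral_mult_add_const_mean_zero[symmetric]) (simp_all add: h'_def)
  also have "\<dots> \<le> C * (S + overlap_const TYPE('n) * 0)"
  proof (rule LIMSEQ_le)
    show "(\<lambda>n. \<integral>x. h' x * radial_cutoff (real n) x * truncate n u x \<partial>lborel) \<longlonglongrightarrow> (\<integral>x. h' x * u x \<partial>lborel)"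
      using hc(1) by (intro tendsto_integral_cutoff_truncate[OF h'_cont _ u]) (simp add: h'_def)
    show "(\<lambda>n. C * (S + overlap_const TYPE('n) * E n)) \<longlonglongrightarrow> C * (S + overlap_const TYPE('n) * 0)"
      unfolding E_def by (intro tendsto_intros tendsto_weighted_truncation_error[OF u])
    show "\<exists>N. \<forall>n\<ge>N. (\<integral>x. h' x * radial_cutoff (real n) x * truncate n u x \<partial>lborel)
        \<le> C * (S + overlap_const TYPE('n) * E n)"
    proof (intro exI allI impI)
      fix n assume "nat \<lceil>max 1 (max c0 (real CARD('n) * B))\<rceil> \<le> n"
      then have R: "0 < real n" "c0 \<le> real n" "real CARD('n) * B \<le> real n" by linarith+
      have "\<bar>wip (\<lambda>x. h' x * radial_cutoff (real n) x) (wsys \<phi>0 \<psi>0 a)\<bar> \<le> C * rhs_weight a"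
        if "a \<in> wsys_index" for a
        unfolding C_def using hc by (intro cutoff_coef_le[OF onb h' _ _ R that]) (simp_all add: h'_def)
      then show "(\<integral>x. h' x * radial_cutoff (real n) x * truncate n u x \<partial>lborel)
          \<le> C * (S + overlap_const TYPE('n) * E n)"
        using integral_mult_truncate_le[OF onb square_integrable_mult_radial_cutoff[OF h'_cont R(1)]
            cutoff_const_nonneg[OF c0, where 'n='n] _ u S]
        by (simp add: C_def E_def)
    qed
  qed
  finally show ?thesis by (simp add: C_def c0_def)
qed

lemma W1_le_wavelet_rhs:
  fixes f g :: "real^'n::finite \<Rightarrow> real"
  assumes onb: "is_ONB (wsys \<phi>0 \<psi>0 :: _ \<Rightarrow> real^'n \<Rightarrow> real) wsys_index"
    and f: "prob_density f" "finite_first_moment f"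
    and g: "g \<in> borel_measurable lborel" "integrable lborel g" "(\<integral>x. g x \<partial>lborel) = 1" "finite_first_moment g"
  shows "ennreal (W1 g f)
           \<le> ennreal (cutoff_const TYPE('n) (shift_const TYPE('n)) + 1) * wavelet_rhs \<phi>0 \<psi>0 (\<lambda>x. f x - g x)"
proof (cases "wavelet_rhs \<phi>0 \<psi>0 (\<lambda>x. f x - g x) = \<infinity>")
  case True
  have "0 \<le> cutoff_const TYPE('n) (shift_const TYPE('n))" by (intro cutoff_const_nonneg shift_const_nonneg)
  with True show ?thesis by (simp add: ennreal_mult_top)
next
  case False
  define C where "C = cutoff_const TYPE('n) (shift_const TYPE('n))"
  define S where "S = enn2real (wavelet_rhs \<phi>0 \<psi>0 (\<lambda>x. f x - g x))"
  have C: "0 \<le> C" unfolding C_def by (rule cutoff_const_nonneg[OF shift_const_nonneg])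
  have rhs: "wavelet_rhs \<phi>0 \<psi>0 (\<lambda>x. f x - g x) = ennreal S" and S: "0 \<le> S"
    using False by (simp_all add: S_def less_top)
  have f': "f \<in> borel_measurable lborel" "integrable lborel f" "(\<integral>x. f x \<partial>lborel) = 1"
    using f(1) by (auto simp: prob_density_def)
  have partial: "(\<Sum>a\<in>F. rhs_weight a * \<bar>wip (\<lambda>x. g x - f x) (wsys \<phi>0 \<psi>0 a)\<bar>) \<le> S"
    if "finite F" "F \<subseteq> wsys_index" for F
  proof -
    have "wip (\<lambda>x. g x - f x) b = - wip (\<lambda>x. f x - g x) b" for b :: "real^'n \<Rightarrow> real"
      unfolding wip_def by (simp add: algebra_simps flip: integral_minus)
    then have "ennreal (\<Sum>a\<in>F. rhs_weight a * \<bar>wip (\<lambda>x. g x - f x) (wsys \<phi>0 \<psi>0 a)\<bar>) \<le> ennreal S"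
      using sum_rhs_weight_le_wavelet_rhs[OF that, of "\<lambda>x. f x - g x" \<phi>0 \<psi>0] by (simp add: rhs)
    then show ?thesis using S by (simp add: ennreal_le_iff)
  qed
  have "W1 g f \<le> C * S"
    unfolding C_def
    using integrable_weighted_abs_diff[OF f'(1,2) f(2) g(1,2,4)] f' g partial
    by (intro W1_leI lipschitz_pairing_le[OF onb]) auto
  also have "\<dots> \<le> (C + 1) * S" using S by (simp add: distrib_right)
  finally have "ennreal (W1 g f) \<le> ennreal ((C + 1) * S)" by (rule ennreal_leI)
  also have "\<dots> = ennreal (C + 1) * wavelet_rhs \<phi>0 \<psi>0 (\<lambda>x. f x - g x)"
    using C S by (simp add: rhs ennreal_mult)
  finally show ?thesis by (simp add: C_def)
qed

end

lemma wavelet_basis_imp_compact_wavelet_pair: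
  assumes "wavelet_basis TYPE('n::finite) S \<phi>0 \<psi>0"
  obtains B m where "compact_wavelet_pair \<phi>0 \<psi>0 B m"
    and "is_ONB (wsys \<phi>0 \<psi>0 :: _ \<Rightarrow> real^'n \<Rightarrow> real) wsys_index"
proof -
  have w: "C_reg S \<phi>0" "C_reg S \<psi>0" "compact_supp \<phi>0" "compact_supp \<psi>0"
       "is_ONB (wsys \<phi>0 \<psi>0 :: _ \<Rightarrow> real^'n \<Rightarrow> real) wsys_index"
    using assms unfolding wavelet_basis_def by auto
  have "continuous_on UNIV \<phi>0" "continuous_on UNIV \<psi>0"
    using w(1,2) unfolding C_reg_def by (metis funpow_0 le0)+
  moreover obtain a1 a2 where "\<forall>x. a1 < \<bar>x\<bar> \<longrightarrow> \<phi>0 x = 0" "\<forall>x. a2 < \<bar>x\<bar> \<longrightarrow> \<psi>0 x = 0"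
    using w(3,4) unfolding compact_supp_def by blast
  ultimately have supp: "cont_supp_cball \<phi>0 (max 0 (max a1 a2))" "cont_supp_cball \<psi>0 (max 0 (max a1 a2))"
    by (auto simp: cont_supp_cball_def)
  obtain m1 m2 where "\<And>t. \<bar>\<phi>0 t\<bar> \<le> m1" "\<And>t. \<bar>\<psi>0 t\<bar> \<le> m2"
    using cont_supp_cball_bounded[OF supp(1)] cont_supp_cball_bounded[OF supp(2)] by metis
  then have "compact_wavelet_pair \<phi>0 \<psi>0 (max 0 (max a1 a2)) (max m1 m2)"
    using supp by unfold_locales (auto intro: max.coboundedI1 max.coboundedI2 order_trans)
  then show ?thesis using that w(5) by blast
qed

theorem mainTheorem7:
  fixes S :: nat and \<phi>0 \<psi>0 :: "real \<Rightarrow> real"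
  assumes "wavelet_basis TYPE('n::finite) S \<phi>0 \<psi>0"
  shows "\<exists>C>0. \<forall>(f :: real^'n \<Rightarrow> real) (g :: real^'n \<Rightarrow> real).
           prob_density f \<and> finite_first_moment f \<and>
           g \<in> borel_measurable lborel \<and> integrable lborel g \<and> (LINT x|lborel. g x) = 1 \<and>
           finite_first_moment g
           \<longrightarrow> ennreal (W1 g f) \<le> ennreal C *
                 ((\<Sum>\<^sub>\<infinity>k\<in>UNIV. ennreal (norm (int_vec k) *
                        \<bar>wip (\<lambda>x. f x - g x) (phi_k \<phi>0 k)\<bar>))
                + (\<Sum>\<^sub>\<infinity>l\<in>UNIV. \<Sum>\<^sub>\<infinity>(\<iota>, k)\<in>wtypes \<times> UNIV.
                     ennreal (2 powr (- (real l * (real CARD('n) / 2 + 1))) *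
                        \<bar>wip (\<lambda>x. f x - g x) (psi_lk \<phi>0 \<psi>0 l \<iota> k)\<bar>)))"
proof -
  obtain B m where "compact_wavelet_pair \<phi>0 \<psi>0 B m"
    and onb: "is_ONB (wsys \<phi>0 \<psi>0 :: _ \<Rightarrow> real^'n \<Rightarrow> real) wsys_index"
    using wavelet_basis_imp_compact_wavelet_pair[OF assms] by blast
  then interpret compact_wavelet_pair \<phi>0 \<psi>0 B m by simp
  define C where "C = cutoff_const TYPE('n) (shift_const TYPE('n)) + 1"
  have "0 \<le> cutoff_const TYPE('n) (shift_const TYPE('n))" by (intro cutoff_const_nonneg shift_const_nonneg)
  then have "0 < C" by (simp add: C_def)
  moreover have "ennreal (W1 g f) \<le> ennreal C * wavelet_rhs \<phi>0 \<psi>0 (\<lambda>x. f x - g x)"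
    if "prob_density f \<and> finite_first_moment f \<and> g \<in> borel_measurable lborel \<and> integrable lborel g
        \<and> (\<integral>x. g x \<partial>lborel) = 1 \<and> finite_first_moment g" for f g :: "real^'n \<Rightarrow> real"
    using that W1_le_wavelet_rhs[OF onb, of f g] by (simp add: C_def)
  ultimately show ?thesis unfolding wavelet_rhs_def by blast
qed

end
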